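(* Let $n\ge 3$ be an odd integer and $(\mathcal{C},\Sigma)$ an $n$-angulated category. Define a relation on objects of $\mathcal{C}$ by $A\sim B$ iff there exist objects $C_1,\dots,C_n$ and two $n$-angles $A\oplus C_1\xrightarrow{\alpha_1}C_2\xrightarrow{\alpha_2}\cdots\xrightarrow{\alpha_{n-1}}C_n\xrightarrow{\alpha_n}\Sigma A\oplus\Sigma C_1$ and $B\oplus C_1\xrightarrow{\beta_1}C_2\xrightarrow{\beta_2}\cdots\xrightarrow{\beta_{n-1}}C_n\xrightarrow{\beta_n}\Sigma B\oplus\Sigma C_1$ in $\mathcal{C}$. Then: (1) $\sim$ is an equivalence relation. (2) The set $\pi$ of equivalence classes $\{A\}$ is an abelian group under $\{A\}+\{B\}=\{A\oplus B\}$, and the inverse of $\{A\}$ is $\{\Sigma A\}$. (3) The assignment $\{A\}\leftrightarrow[A]$ gives an isomorphism of groups $\pi\cong K_0(\mathcal{C})$.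
   Context: All categories are small. Fix an integer $n\ge 3$. Let $\mathcal{C}$ be an additive category with an automorphism $\Sigma$. An $n$-$\Sigma$-sequence in $\mathcal{C}$ is a diagram $A_1\xrightarrow{\alpha_1}A_2\xrightarrow{\alpha_2}\cdots\xrightarrow{\alpha_{n-1}}A_n\xrightarrow{\alpha_n}\Sigma A_1$. Its left rotation is $A_2\xrightarrow{\alpha_2}\cdots\xrightarrow{\alpha_n}\Sigma A_1\xrightarrow{(-1)^n\Sigma\alpha_1}\Sigma A_2$. A morphism from $(A_\bullet,\alpha)$ to $(B_\bullet,\beta)$ is a tuple $(\varphi_1,\dots,\varphi_n)$, $\varphi_i:A_i\to B_i$, with $\beta_i\varphi_i=\varphi_{i+1}\alpha_i$ for $1\le i\le n-1$ and $\beta_n\varphi_n=(\Sigma\varphi_1)\alpha_n$; it is an isomorphism if all $\varphi_i$ are isomorphisms. Direct sums of sequences are taken termwise. $(\mathcal{C},\Sigma)$ is $n$-angulated if it is equipped with a collection $\mathscr N$ of $n$-$\Sigma$-sequences, called $n$-angles, such that: (N1)(a) $\mathscr N$ is closed under direct sums, direct summands and isomorphisms of $n$-$\Sigma$-sequences; (b) for every object $A$, the trivial sequence $A\xrightarrow{1}A\to0\to\cdots\to0\to\Sigma A$ is in $\mathscr N$; (c) every morphism $A_1\to A_2$ is the first morphism of some $n$-angle; (N2) an $n$-$\Sigma$-sequence is in $\mathscr N$ iff its left rotation is; (N3) given $n$-angles $(A_\bullet,\alpha),(B_\bullet,\beta)$ and $\varphi_1:A_1\to B_1$, $\varphi_2:A_2\to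 B_2$ with $\beta_1\varphi_1=\varphi_2\alpha_1$, there exist $\varphi_3,\dots,\varphi_n$ making $(\varphi_1,\dots,\varphi_n)$ a morphism; (N4) in (N3) the $\varphi_i$ can be chosen so that the mapping cone $A_2\oplus B_1\to A_3\oplus B_2\to\cdots\to\Sigma A_1\oplus B_n\to\Sigma A_2\oplus\Sigma B_1$, with maps $\left[\begin{smallmatrix}-\alpha_{i+1}&0\\ \varphi_{i+1}&\beta_i\end{smallmatrix}\right]$ ($1\le i\le n-1$) and last map $\left[\begin{smallmatrix}-\Sigma\alpha_1&0\\ \Sigma\varphi_1&\beta_n\end{smallmatrix}\right]$, is an $n$-angle. Grothendieck group: let $F(\mathcal{C})$ be the free abelian group on the isomorphism classes $\langle A\rangle$ of objects of $\mathcal{C}$. For an $n$-angle $A_\bullet$ put $\chi(A_\bullet)=\sum_{i=1}^n(-1)^{i+1}\langle A_i\rangle$. Let $R(\mathcal{C})$ be the subgroup generated by all $\chi(A_\bullet)$ ($A_\bullet$ an $n$-angle), together with $\langle 0\rangle$ when $n$ is even. Then $K_0(\mathcal{C})=F(\mathcal{C})/R(\mathcal{C})$, and $[A]$ denotes the class of $\langle A\rangle$. *)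

theory Defs
  imports "HOL-Algebra.Free_Abelian_Groups"
begin

text \<open>A (small) category given by its set of objects, its set of morphisms,
domain/codomain maps, composition (cmp g f = g after f) and identities,
together with the additive structure on hom-sets (pls = addition,
zro A B = zero morphism A -> B, ngt = negation).\<close>

record ('o, 'm) addcat =
  ob  :: "'o set"
  ar  :: "'m set"
  dm  :: "'m \<Rightarrow> 'o"
  cd  :: "'m \<Rightarrow> 'o"
  cmp :: "'m \<Rightarrow> 'm \<Rightarrow> 'm"
  idn :: "'o \<Rightarrow> 'm"
  pls :: "'m \<Rightarrow> 'm \<Rightarrow> 'm"
  zro :: "'o \<Rightarrow> 'o \<Rightarrow> 'm"
  ngt :: "'m \<Rightarrow> 'm"

definition Hom :: "('o, 'm) addcat \<Rightarrow> 'o \<Rightarrow> 'o \<Rightarrow> 'm set" where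
  "Hom C A B = {f \<in> ar C. dm C f = A \<and> cd C f = B}"

definition is_category :: "('o, 'm) addcat \<Rightarrow> bool" where
  "is_category C \<longleftrightarrow>
     (\<forall>f\<in>ar C. dm C f \<in> ob C \<and> cd C f \<in> ob C) \<and>
     (\<forall>A\<in>ob C. idn C A \<in> Hom C A A) \<and>
     (\<forall>f\<in>ar C. \<forall>g\<in>ar C. cd C f = dm C g \<longrightarrow> cmp C g f \<in> Hom C (dm C f) (cd C g)) \<and>
     (\<forall>f\<in>ar C. cmp C (idn C (cd C f)) f = f \<and> cmp C f (idn C (dm C f)) = f) \<and>
     (\<forall>f\<in>ar C. \<forall>g\<in>ar C. \<forall>h\<in>ar C. cd C f = dm C g \<longrightarrow> cd C g = dm C h \<longrightarrow>
        cmp C h (cmp C g f) = cmp C (cmp C h g) f)"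

definition is_biprod :: "('o, 'm) addcat \<Rightarrow> 'o \<Rightarrow> 'o \<Rightarrow> 'o \<Rightarrow> 'm \<times> 'm \<times> 'm \<times> 'm \<Rightarrow> bool" where
  "is_biprod C X A B d \<longleftrightarrow> (case d of (p1, p2, i1, i2) \<Rightarrow>
     p1 \<in> Hom C X A \<and> p2 \<in> Hom C X B \<and> i1 \<in> Hom C A X \<and> i2 \<in> Hom C B X \<and>
     cmp C p1 i1 = idn C A \<and> cmp C p2 i2 = idn C B \<and>
     cmp C p1 i2 = zro C B A \<and> cmp C p2 i1 = zro C A B \<and>
     pls C (cmp C i1 p1) (cmp C i2 p2) = idn C X)"

definition biprod :: "('o, 'm) addcat \<Rightarrow> 'o \<Rightarrow> 'o \<Rightarrow> 'o \<Rightarrow> bool" where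
  "biprod C X A B \<longleftrightarrow> (\<exists>d. is_biprod C X A B d)"

definition is_zero_obj :: "('o, 'm) addcat \<Rightarrow> 'o \<Rightarrow> bool" where
  "is_zero_obj C Z \<longleftrightarrow> Z \<in> ob C \<and> idn C Z = zro C Z Z"

definition is_additive :: "('o, 'm) addcat \<Rightarrow> bool" where
  "is_additive C \<longleftrightarrow> is_category C \<and>
     (\<forall>A\<in>ob C. \<forall>B\<in>ob C.
        zro C A B \<in> Hom C A B \<and>
        (\<forall>f\<in>Hom C A B. ngt C f \<in> Hom C A B \<and> pls C f (zro C A B) = f \<and>
                          pls C f (ngt C f) = zro C A B) \<and>
        (\<forall>f\<in>Hom C A B. \<forall>g\<in>Hom C A B. pls C f g \<in> Hom C A B \<and> pls C f g = pls C g f) \<and>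
        (\<forall>f\<in>Hom C A B. \<forall>g\<in>Hom C A B. \<forall>h\<in>Hom C A B.
           pls C (pls C f g) h = pls C f (pls C g h))) \<and>
     (\<forall>A\<in>ob C. \<forall>B\<in>ob C. \<forall>D\<in>ob C.
        (\<forall>f\<in>Hom C A B. \<forall>g\<in>Hom C B D. \<forall>g'\<in>Hom C B D.
           cmp C (pls C g g') f = pls C (cmp C g f) (cmp C g' f)) \<and>
        (\<forall>f\<in>Hom C A B. \<forall>f'\<in>Hom C A B. \<forall>g\<in>Hom C B D.
           cmp C g (pls C f f') = pls C (cmp C g f) (cmp C g f'))) \<and>
     (\<exists>Z. is_zero_obj C Z) \<and>
     (\<forall>A\<in>ob C. \<forall>B\<in>ob C. \<exists>X\<in>ob C. biprod C X A B)"

definition is_automorphism :: "('o, 'm) addcat \<Rightarrow> ('o \<Rightarrow> 'o) \<Rightarrow> ('m \<Rightarrow> 'm) \<Rightarrow> bool" where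
  "is_automorphism C So Sm \<longleftrightarrow>
     bij_betw So (ob C) (ob C) \<and> bij_betw Sm (ar C) (ar C) \<and>
     (\<forall>A\<in>ob C. \<forall>B\<in>ob C. \<forall>f\<in>Hom C A B. Sm f \<in> Hom C (So A) (So B)) \<and>
     (\<forall>A\<in>ob C. Sm (idn C A) = idn C (So A)) \<and>
     (\<forall>f\<in>ar C. \<forall>g\<in>ar C. cd C f = dm C g \<longrightarrow> Sm (cmp C g f) = cmp C (Sm g) (Sm f)) \<and>
     (\<forall>A\<in>ob C. \<forall>B\<in>ob C. \<forall>f\<in>Hom C A B. \<forall>g\<in>Hom C A B. Sm (pls C f g) = pls C (Sm f) (Sm g))"

text \<open>An n-\<Sigma>-sequence is a pair (X, a) of lists of length n, 0-indexed:
  X!0 -a!0-> X!1 -> ... -> X!(n-1) -a!(n-1)-> \<Sigma>(X!0).\<close>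

type_synonym ('o, 'm) nseq = "'o list \<times> 'm list"

definition is_nseq :: "nat \<Rightarrow> ('o, 'm) addcat \<Rightarrow> ('o \<Rightarrow> 'o) \<Rightarrow> ('o, 'm) nseq \<Rightarrow> bool" where
  "is_nseq n C So S \<longleftrightarrow> (case S of (X, a) \<Rightarrow>
     length X = n \<and> length a = n \<and> set X \<subseteq> ob C \<and>
     (\<forall>i. Suc i < n \<longrightarrow> a ! i \<in> Hom C (X ! i) (X ! Suc i)) \<and>
     a ! (n - 1) \<in> Hom C (X ! (n - 1)) (So (X ! 0)))"

definition is_nseq_morph :: "nat \<Rightarrow> ('o, 'm) addcat \<Rightarrow> ('m \<Rightarrow> 'm)
    \<Rightarrow> ('o, 'm) nseq \<Rightarrow> ('o, 'm) nseq \<Rightarrow> 'm list \<Rightarrow> bool" where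
  "is_nseq_morph n C Sm S T phi \<longleftrightarrow> (case S of (X, a) \<Rightarrow> case T of (Y, b) \<Rightarrow>
     length phi = n \<and> (\<forall>i<n. phi ! i \<in> Hom C (X ! i) (Y ! i)) \<and>
     (\<forall>i. Suc i < n \<longrightarrow> cmp C (b ! i) (phi ! i) = cmp C (phi ! Suc i) (a ! i)) \<and>
     cmp C (b ! (n - 1)) (phi ! (n - 1)) = cmp C (Sm (phi ! 0)) (a ! (n - 1)))"

definition is_iso_arr :: "('o, 'm) addcat \<Rightarrow> 'm \<Rightarrow> bool" where
  "is_iso_arr C f \<longleftrightarrow> f \<in> ar C \<and> (\<exists>g\<in>Hom C (cd C f) (dm C f).
      cmp C g f = idn C (dm C f) \<and> cmp C f g = idn C (cd C f))"

definition is_nseq_iso :: "nat \<Rightarrow> ('o, 'm) addcat \<Rightarrow> ('m \<Rightarrow> 'm)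
    \<Rightarrow> ('o, 'm) nseq \<Rightarrow> ('o, 'm) nseq \<Rightarrow> 'm list \<Rightarrow> bool" where
  "is_nseq_iso n C Sm S T phi \<longleftrightarrow> is_nseq_morph n C Sm S T phi \<and> (\<forall>i<n. is_iso_arr C (phi ! i))"

text \<open>U is a direct sum of S and T: termwise biproducts such that the canonical
inclusions and projections are morphisms of n-\<Sigma>-sequences (equivalently, the
morphisms of U are the diagonal sums of those of S and T).\<close>

definition is_nseq_sum :: "nat \<Rightarrow> ('o, 'm) addcat \<Rightarrow> ('m \<Rightarrow> 'm)
    \<Rightarrow> ('o, 'm) nseq \<Rightarrow> ('o, 'm) nseq \<Rightarrow> ('o, 'm) nseq \<Rightarrow> bool" where
  "is_nseq_sum n C Sm U S T \<longleftrightarrow>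
     (\<exists>p1 p2 i1 i2. (\<forall>i<n. is_biprod C (fst U ! i) (fst S ! i) (fst T ! i)
                                (p1 ! i, p2 ! i, i1 ! i, i2 ! i)) \<and>
        is_nseq_morph n C Sm U S p1 \<and> is_nseq_morph n C Sm U T p2 \<and>
        is_nseq_morph n C Sm S U i1 \<and> is_nseq_morph n C Sm T U i2)"

definition rotate_nseq :: "nat \<Rightarrow> ('o, 'm) addcat \<Rightarrow> ('o \<Rightarrow> 'o) \<Rightarrow> ('m \<Rightarrow> 'm)
    \<Rightarrow> ('o, 'm) nseq \<Rightarrow> ('o, 'm) nseq" where
  "rotate_nseq n C So Sm S = (case S of (X, a) \<Rightarrow>
     (tl X @ [So (hd X)],
      tl a @ [if even n then Sm (hd a) else ngt C (Sm (hd a))]))"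

definition trivial_nseq :: "nat \<Rightarrow> ('o, 'm) addcat \<Rightarrow> ('o \<Rightarrow> 'o) \<Rightarrow> 'o \<Rightarrow> 'o \<Rightarrow> ('o, 'm) nseq" where
  "trivial_nseq n C So A Z =
     (A # A # replicate (n - 2) Z,
      idn C A # zro C A Z # replicate (n - 3) (zro C Z Z) @ [zro C Z (So A)])"

text \<open>D is a mapping cone of the morphism phi : (X,a) -> (Y,b):
  D!i = X!(i+1) \<oplus> Y!i (with X!n read as \<Sigma>(X!0)), and morphisms given by the
  matrices [[-a!(i+1), 0], [phi!(i+1), b!i]], the last one being
  [[-\<Sigma>(a!0), 0], [\<Sigma>(phi!0), b!(n-1)]] into \<Sigma>(D!0) = \<Sigma>X!1 \<oplus> \<Sigma>Y!0.\<close>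

definition mat2 :: "('o, 'm) addcat \<Rightarrow> 'm \<times> 'm \<times> 'm \<times> 'm \<Rightarrow> 'm \<times> 'm \<times> 'm \<times> 'm
    \<Rightarrow> 'm \<Rightarrow> 'm \<Rightarrow> 'm \<Rightarrow> 'm" where
  "mat2 C ds dt u v w = (case ds of (p1, p2, _, _) \<Rightarrow> case dt of (_, _, k1, k2) \<Rightarrow>
     pls C (pls C (cmp C k1 (cmp C u p1)) (cmp C k2 (cmp C v p1))) (cmp C k2 (cmp C w p2)))"

definition is_mapping_cone :: "nat \<Rightarrow> ('o, 'm) addcat \<Rightarrow> ('o \<Rightarrow> 'o) \<Rightarrow> ('m \<Rightarrow> 'm)
    \<Rightarrow> ('o, 'm) nseq \<Rightarrow> ('o, 'm) nseq \<Rightarrow> 'm list \<Rightarrow> ('o, 'm) nseq \<Rightarrow> bool" where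
  "is_mapping_cone n C So Sm S T phi Cn \<longleftrightarrow> (case S of (X, a) \<Rightarrow> case T of (Y, b) \<Rightarrow>
     case Cn of (D, c) \<Rightarrow>
     length D = n \<and> length c = n \<and>
     (\<exists>d :: nat \<Rightarrow> 'm \<times> 'm \<times> 'm \<times> 'm.
        (\<forall>i<n. is_biprod C (D ! i) (if Suc i < n then X ! Suc i else So (X ! 0)) (Y ! i) (d i)) \<and>
        (\<forall>i. Suc i < n \<longrightarrow>
           c ! i = mat2 C (d i) (d (Suc i)) (ngt C (a ! Suc i)) (phi ! Suc i) (b ! i)) \<and>
        c ! (n - 1) = mat2 C (d (n - 1)) (case d 0 of (p1, p2, i1, i2) \<Rightarrow> (Sm p1, Sm p2, Sm i1, Sm i2))
                         (ngt C (Sm (a ! 0))) (Sm (phi ! 0)) (b ! (n - 1))))"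

definition n_angulated :: "nat \<Rightarrow> ('o, 'm) addcat \<Rightarrow> ('o \<Rightarrow> 'o) \<Rightarrow> ('m \<Rightarrow> 'm)
    \<Rightarrow> ('o, 'm) nseq set \<Rightarrow> bool" where
  "n_angulated n C So Sm N \<longleftrightarrow>
     3 \<le> n \<and> is_additive C \<and> is_automorphism C So Sm \<and>
     (\<forall>S\<in>N. is_nseq n C So S) \<and>
     \<comment> \<open>(N1a)\<close>
     (\<forall>U S T. is_nseq n C So U \<and> is_nseq n C So S \<and> is_nseq n C So T \<and> is_nseq_sum n C Sm U S T
        \<longrightarrow> (U \<in> N \<longleftrightarrow> S \<in> N \<and> T \<in> N)) \<and>
     (\<forall>S T phi. is_nseq n C So S \<and> T \<in> N \<and> is_nseq_iso n C Sm S T phi \<longrightarrow> S \<in> N) \<and>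
     \<comment> \<open>(N1b)\<close>
     (\<forall>A\<in>ob C. \<forall>Z. is_zero_obj C Z \<longrightarrow> trivial_nseq n C So A Z \<in> N) \<and>
     \<comment> \<open>(N1c)\<close>
     (\<forall>f\<in>ar C. \<exists>S\<in>N. fst S ! 0 = dm C f \<and> fst S ! 1 = cd C f \<and> snd S ! 0 = f) \<and>
     \<comment> \<open>(N2)\<close>
     (\<forall>S. is_nseq n C So S \<longrightarrow> (S \<in> N \<longleftrightarrow> rotate_nseq n C So Sm S \<in> N)) \<and>
     \<comment> \<open>(N3)\<close>
     (\<forall>S\<in>N. \<forall>T\<in>N. \<forall>f0 f1.
        f0 \<in> Hom C (fst S ! 0) (fst T ! 0) \<and> f1 \<in> Hom C (fst S ! 1) (fst T ! 1) \<and>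
        cmp C (snd T ! 0) f0 = cmp C f1 (snd S ! 0) \<longrightarrow>
        (\<exists>phi. phi ! 0 = f0 \<and> phi ! 1 = f1 \<and> is_nseq_morph n C Sm S T phi)) \<and>
     \<comment> \<open>(N4)\<close>
     (\<forall>S\<in>N. \<forall>T\<in>N. \<forall>f0 f1.
        f0 \<in> Hom C (fst S ! 0) (fst T ! 0) \<and> f1 \<in> Hom C (fst S ! 1) (fst T ! 1) \<and>
        cmp C (snd T ! 0) f0 = cmp C f1 (snd S ! 0) \<longrightarrow>
        (\<exists>phi. phi ! 0 = f0 \<and> phi ! 1 = f1 \<and> is_nseq_morph n C Sm S T phi \<and>
               (\<exists>Cn\<in>N. is_mapping_cone n C So Sm S T phi Cn)))"

definition sim_rel :: "nat \<Rightarrow> ('o, 'm) addcat \<Rightarrow> ('o, 'm) nseq set \<Rightarrow> 'o \<Rightarrow> 'o \<Rightarrow> bool" where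
  "sim_rel n C N A B \<longleftrightarrow> A \<in> ob C \<and> B \<in> ob C \<and>
     (\<exists>C1 Cs D D' a b. C1 \<in> ob C \<and> length Cs = n - 1 \<and>
        biprod C D A C1 \<and> biprod C D' B C1 \<and> (D # Cs, a) \<in> N \<and> (D' # Cs, b) \<in> N)"

definition sim_class :: "nat \<Rightarrow> ('o, 'm) addcat \<Rightarrow> ('o, 'm) nseq set \<Rightarrow> 'o \<Rightarrow> 'o set" where
  "sim_class n C N A = {B. sim_rel n C N A B}"

text \<open>The set \<pi> of equivalence classes with {A} + {B} = {A \<oplus> B} (for some chosen
biproduct; well-definedness is part of the theorem) and unit the class of a
zero object.\<close>

definition pi_group :: "nat \<Rightarrow> ('o, 'm) addcat \<Rightarrow> ('o, 'm) nseq set \<Rightarrow> 'o set monoid" where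
  "pi_group n C N =
     \<lparr>carrier = sim_class n C N ` ob C,
      mult = (\<lambda>x y. sim_class n C N
                 (SOME X. X \<in> ob C \<and> biprod C X (SOME A. A \<in> x) (SOME B. B \<in> y))),
      one = sim_class n C N (SOME Z. is_zero_obj C Z)\<rparr>"

definition isomorphic_obj :: "('o, 'm) addcat \<Rightarrow> 'o \<Rightarrow> 'o \<Rightarrow> bool" where
  "isomorphic_obj C A B \<longleftrightarrow> (\<exists>f\<in>Hom C A B. is_iso_arr C f)"

definition iso_class :: "('o, 'm) addcat \<Rightarrow> 'o \<Rightarrow> 'o set" where
  "iso_class C A = {B \<in> ob C. isomorphic_obj C A B}"

definition FC :: "('o, 'm) addcat \<Rightarrow> ('o set \<Rightarrow>\<^sub>0 int) monoid" where
  "FC C = free_Abelian_group (iso_class C ` ob C)"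

definition chi :: "nat \<Rightarrow> ('o, 'm) addcat \<Rightarrow> ('o, 'm) nseq \<Rightarrow> 'o set \<Rightarrow>\<^sub>0 int" where
  "chi n C S = (\<Sum>i<n. frag_cmul ((-1) ^ i) (frag_of (iso_class C (fst S ! i))))"

definition RC :: "nat \<Rightarrow> ('o, 'm) addcat \<Rightarrow> ('o, 'm) nseq set \<Rightarrow> ('o set \<Rightarrow>\<^sub>0 int) set" where
  "RC n C N = generate (FC C)
      (chi n C ` N \<union> (if even n then {frag_of (iso_class C (SOME Z. is_zero_obj C Z))} else {}))"

definition K0 :: "nat \<Rightarrow> ('o, 'm) addcat \<Rightarrow> ('o, 'm) nseq set \<Rightarrow> ('o set \<Rightarrow>\<^sub>0 int) set monoid" where
  "K0 n C N = FC C Mod RC n C N"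

definition K0_class :: "nat \<Rightarrow> ('o, 'm) addcat \<Rightarrow> ('o, 'm) nseq set \<Rightarrow> 'o \<Rightarrow> ('o set \<Rightarrow>\<^sub>0 int) set" where
  "K0_class n C N A = r_coset (FC C) (RC n C N) (frag_of (iso_class C A))"

end

theory Submission
  imports Defs
begin

text \<open>For an $n$-angle $X$ let $T_0$ and $T_1$ be the direct sums of its even- and odd-indexed
  terms. Adding to $X$ a telescoping direct sum of rotated trivial $n$-angles yields two
  $n$-angles that agree from the second term on and start with $T_0$ and $T_1$; hence
  $T_0 \sim T_1$. For the rotated trivial $n$-angle $A \to 0 \to \cdots \to 0 \to \Sigma A$
  and odd $n$ this says $A \oplus \Sigma A \sim 0$, the inverse law in $\pi$. The map
  $\{A\} \mapsto [A]$ is well defined because the two $n$-angles witnessing $A \sim B$ have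
  Euler characteristics differing by $[A] - [B]$; in the other direction $[A] \mapsto \{A\}$
  sends the Euler characteristic of an $n$-angle to $\{T_0\} - \{T_1\} = 0$.\<close>

lemma nth_eq_if_tl_eq:
  "length P = length Q \<Longrightarrow> tl P = tl Q \<Longrightarrow> 0 < i \<Longrightarrow> i < length P \<Longrightarrow> P ! i = Q ! i"
  by (cases P; cases Q) (auto simp: nth_Cons')

lemma frag_cmul_sum_left: "finite I \<Longrightarrow> frag_cmul (sum c I) x = (\<Sum>i\<in>I. frag_cmul (c i) x)"
  by (induction I rule: finite_induct) (simp_all add: frag_cmul_distrib)

lemma sum_neg_one_power_odd: "odd m \<Longrightarrow> (\<Sum>i<m. (-1::int) ^ i) = 1"
proof -
  have "(\<Sum>i<2 * k. (-1::int) ^ i) = 0" for k by (induction k) (simp_all add: numeral_2_eq_2)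
  moreover assume "odd m"
  then obtain k where "m = Suc (2 * k)" by (auto elim: oddE)
  ultimately show ?thesis by simp
qed

locale additive_cat =
  fixes C :: "('o, 'm) addcat"
  assumes additive: "is_additive C"
begin

lemma category: "is_category C"
  using additive unfolding is_additive_def by blast

lemma Hom_iff: "f \<in> Hom C A B \<longleftrightarrow> f \<in> ar C \<and> dm C f = A \<and> cd C f = B"
  by (simp add: Hom_def)

lemma dm_ob[simp]: "f \<in> ar C \<Longrightarrow> dm C f \<in> ob C"
  and cd_ob[simp]: "f \<in> ar C \<Longrightarrow> cd C f \<in> ob C"
  using category unfolding is_category_def by blast+

lemma cmp_ar[simp]: "f \<in> ar C \<Longrightarrow> g \<in> ar C \<Longrightarrow> cd C f = dm C g \<Longrightarrow> cmp C g f \<in> ar C"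
  and dm_cmp[simp]: "f \<in> ar C \<Longrightarrow> g \<in> ar C \<Longrightarrow> cd C f = dm C g \<Longrightarrow> dm C (cmp C g f) = dm C f"
  and cd_cmp[simp]: "f \<in> ar C \<Longrightarrow> g \<in> ar C \<Longrightarrow> cd C f = dm C g \<Longrightarrow> cd C (cmp C g f) = cd C g"
  using category unfolding is_category_def Hom_iff by blast+

lemma idn_ar[simp]: "A \<in> ob C \<Longrightarrow> idn C A \<in> ar C"
  and dm_idn[simp]: "A \<in> ob C \<Longrightarrow> dm C (idn C A) = A"
  and cd_idn[simp]: "A \<in> ob C \<Longrightarrow> cd C (idn C A) = A"
  using category unfolding is_category_def Hom_iff by blast+

lemma cmp_idn_left[simp]: "f \<in> ar C \<Longrightarrow> cd C f = B \<Longrightarrow> cmp C (idn C B) f = f"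
  and cmp_idn_right[simp]: "f \<in> ar C \<Longrightarrow> dm C f = A \<Longrightarrow> cmp C f (idn C A) = f"
  using category unfolding is_category_def by blast+

lemma cmp_assoc[simp]:
  "f \<in> ar C \<Longrightarrow> g \<in> ar C \<Longrightarrow> h \<in> ar C \<Longrightarrow> cd C f = dm C g \<Longrightarrow> cd C g = dm C h \<Longrightarrow>
   cmp C (cmp C h g) f = cmp C h (cmp C g f)"
  using category unfolding is_category_def by metis

lemma cmp_reassoc:
  "cmp C g f = k \<Longrightarrow> f \<in> ar C \<Longrightarrow> g \<in> ar C \<Longrightarrow> h \<in> ar C \<Longrightarrow> cd C h = dm C f \<Longrightarrow>
   cd C f = dm C g \<Longrightarrow> cmp C g (cmp C f h) = cmp C k h"
  by (metis cmp_assoc)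

lemma Hom_abelian_group:
  assumes "A \<in> ob C" "B \<in> ob C"
  shows "zro C A B \<in> Hom C A B \<and>
    (\<forall>f\<in>Hom C A B. ngt C f \<in> Hom C A B \<and> pls C f (zro C A B) = f \<and> pls C f (ngt C f) = zro C A B) \<and>
    (\<forall>f\<in>Hom C A B. \<forall>g\<in>Hom C A B. pls C f g \<in> Hom C A B \<and> pls C f g = pls C g f) \<and>
    (\<forall>f\<in>Hom C A B. \<forall>g\<in>Hom C A B. \<forall>h\<in>Hom C A B. pls C (pls C f g) h = pls C f (pls C g h))"
  using additive assms unfolding is_additive_def by blast

lemma cmp_bilinear:
  assumes "A \<in> ob C" "B \<in> ob C" "D \<in> ob C"
  shows "(\<forall>f\<in>Hom C A B. \<forall>g\<in>Hom C B D. \<forall>g'\<in>Hom C B D.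
           cmp C (pls C g g') f = pls C (cmp C g f) (cmp C g' f)) \<and>
    (\<forall>f\<in>Hom C A B. \<forall>f'\<in>Hom C A B. \<forall>g\<in>Hom C B D.
           cmp C g (pls C f f') = pls C (cmp C g f) (cmp C g f'))"
  using additive assms unfolding is_additive_def by blast

lemma zro_ar[simp]: "A \<in> ob C \<Longrightarrow> B \<in> ob C \<Longrightarrow> zro C A B \<in> ar C"
  and dm_zro[simp]: "A \<in> ob C \<Longrightarrow> B \<in> ob C \<Longrightarrow> dm C (zro C A B) = A"
  and cd_zro[simp]: "A \<in> ob C \<Longrightarrow> B \<in> ob C \<Longrightarrow> cd C (zro C A B) = B"
  using Hom_abelian_group[of A B] by (auto simp: Hom_iff)

lemma pls_ar[simp]:
    "f \<in> ar C \<Longrightarrow> g \<in> ar C \<Longrightarrow> dm C g = dm C f \<Longrightarrow> cd C g = cd C f \<Longrightarrow> pls C f g \<in> ar C"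
  and dm_pls[simp]:
    "f \<in> ar C \<Longrightarrow> g \<in> ar C \<Longrightarrow> dm C g = dm C f \<Longrightarrow> cd C g = cd C f \<Longrightarrow> dm C (pls C f g) = dm C f"
  and cd_pls[simp]:
    "f \<in> ar C \<Longrightarrow> g \<in> ar C \<Longrightarrow> dm C g = dm C f \<Longrightarrow> cd C g = cd C f \<Longrightarrow> cd C (pls C f g) = cd C f"
  using Hom_abelian_group[of "dm C f" "cd C f"] by (auto simp: Hom_iff)

lemma ngt_ar[simp]: "f \<in> ar C \<Longrightarrow> ngt C f \<in> ar C"
  and dm_ngt[simp]: "f \<in> ar C \<Longrightarrow> dm C (ngt C f) = dm C f"
  and cd_ngt[simp]: "f \<in> ar C \<Longrightarrow> cd C (ngt C f) = cd C f"
  using Hom_abelian_group[of "dm C f" "cd C f"] by (auto simp: Hom_iff)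

lemma pls_zro_right[simp]: "f \<in> ar C \<Longrightarrow> A = dm C f \<Longrightarrow> B = cd C f \<Longrightarrow> pls C f (zro C A B) = f"
  using Hom_abelian_group[of "dm C f" "cd C f"] by (auto simp: Hom_iff)

lemma pls_commute:
  "f \<in> ar C \<Longrightarrow> g \<in> ar C \<Longrightarrow> dm C g = dm C f \<Longrightarrow> cd C g = cd C f \<Longrightarrow> pls C f g = pls C g f"
  using Hom_abelian_group[of "dm C f" "cd C f"] by (auto simp: Hom_iff)

lemma pls_zro_left[simp]: "f \<in> ar C \<Longrightarrow> A = dm C f \<Longrightarrow> B = cd C f \<Longrightarrow> pls C (zro C A B) f = f"
  by (subst pls_commute) auto

lemma pls_assoc:
  "f \<in> ar C \<Longrightarrow> g \<in> ar C \<Longrightarrow> h \<in> ar C \<Longrightarrow> dm C g = dm C f \<Longrightarrow> cd C g = cd C f \<Longrightarrow>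
   dm C h = dm C f \<Longrightarrow> cd C h = cd C f \<Longrightarrow> pls C (pls C f g) h = pls C f (pls C g h)"
  using Hom_abelian_group[of "dm C f" "cd C f"] by (auto simp: Hom_iff)

lemma pls_ngt[simp]: "f \<in> ar C \<Longrightarrow> pls C f (ngt C f) = zro C (dm C f) (cd C f)"
  using Hom_abelian_group[of "dm C f" "cd C f"] by (auto simp: Hom_iff)

lemma cmp_pls_left[simp]:
  "f \<in> ar C \<Longrightarrow> g \<in> ar C \<Longrightarrow> g' \<in> ar C \<Longrightarrow> dm C g' = dm C g \<Longrightarrow> cd C g' = cd C g \<Longrightarrow>
   cd C f = dm C g \<Longrightarrow> cmp C (pls C g g') f = pls C (cmp C g f) (cmp C g' f)"
  using cmp_bilinear[of "dm C f" "cd C f" "cd C g"] by (auto simp: Hom_iff)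

lemma cmp_pls_right[simp]:
  "f \<in> ar C \<Longrightarrow> f' \<in> ar C \<Longrightarrow> g \<in> ar C \<Longrightarrow> dm C f' = dm C f \<Longrightarrow> cd C f' = cd C f \<Longrightarrow>
   cd C f = dm C g \<Longrightarrow> cmp C g (pls C f f') = pls C (cmp C g f) (cmp C g f')"
  using cmp_bilinear[of "dm C f" "cd C f" "cd C g"] by (auto simp: Hom_iff)

lemma pls_idem_eq_zro: "f \<in> ar C \<Longrightarrow> pls C f f = f \<Longrightarrow> f = zro C (dm C f) (cd C f)"
proof -
  assume f: "f \<in> ar C" and ff: "pls C f f = f"
  have "pls C f (ngt C f) = pls C (pls C f f) (ngt C f)" using ff by metis
  also have "\<dots> = pls C f (pls C f (ngt C f))" using f by (simp add: pls_assoc del: pls_ngt)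
  also have "\<dots> = f" using f by simp
  finally show ?thesis using f by simp
qed

lemma cmp_zro_right[simp]:
  assumes "g \<in> ar C" "A \<in> ob C" "B = dm C g"
  shows "cmp C g (zro C A B) = zro C A (cd C g)"
proof -
  let ?z = "cmp C g (zro C A B)"
  have "pls C ?z ?z = cmp C g (pls C (zro C A B) (zro C A B))"
    using assms by (simp del: pls_zro_right pls_zro_left)
  also have "\<dots> = ?z" using assms by simp
  finally have "?z = zro C (dm C ?z) (cd C ?z)" using assms by (intro pls_idem_eq_zro) auto
  thus ?thesis using assms by simp
qed

lemma cmp_zro_left[simp]:
  assumes "f \<in> ar C" "D \<in> ob C" "B = cd C f"
  shows "cmp C (zro C B D) f = zro C (dm C f) D"
proof -
  let ?z = "cmp C (zro C B D) f"
  have "pls C ?z ?z = cmp C (pls C (zro C B D) (zro C B D)) f"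
    using assms by (simp del: pls_zro_right pls_zro_left)
  also have "\<dots> = ?z" using assms by simp
  finally have "?z = zro C (dm C ?z) (cd C ?z)" using assms by (intro pls_idem_eq_zro) auto
  thus ?thesis using assms by simp
qed

lemma ngt_ngt[simp]: "f \<in> ar C \<Longrightarrow> ngt C (ngt C f) = f"
proof -
  assume f: "f \<in> ar C"
  let ?g = "ngt C f"
  have "ngt C ?g = pls C (pls C f ?g) (ngt C ?g)" using f by simp
  also have "\<dots> = pls C f (pls C ?g (ngt C ?g))" using f by (simp add: pls_assoc del: pls_ngt)
  also have "\<dots> = f" using f by simp
  finally show ?thesis .
qed

subsection \<open>Isomorphic objects, zero objects and biproducts\<close>

lemma is_biprod_iff: "is_biprod C X A B (p1, p2, i1, i2) \<longleftrightarrow>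
   p1 \<in> ar C \<and> dm C p1 = X \<and> cd C p1 = A \<and> p2 \<in> ar C \<and> dm C p2 = X \<and> cd C p2 = B \<and>
   i1 \<in> ar C \<and> dm C i1 = A \<and> cd C i1 = X \<and> i2 \<in> ar C \<and> dm C i2 = B \<and> cd C i2 = X \<and>
   cmp C p1 i1 = idn C A \<and> cmp C p2 i2 = idn C B \<and>
   cmp C p1 i2 = zro C B A \<and> cmp C p2 i1 = zro C A B \<and>
   pls C (cmp C i1 p1) (cmp C i2 p2) = idn C X"
  by (auto simp: is_biprod_def Hom_iff)

lemma biprod_iff: "biprod C X A B \<longleftrightarrow> (\<exists>p1 p2 i1 i2. is_biprod C X A B (p1, p2, i1, i2))"
  unfolding biprod_def by auto

lemma biprod_ob: "biprod C X A B \<Longrightarrow> X \<in> ob C \<and> A \<in> ob C \<and> B \<in> ob C"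
  unfolding biprod_iff is_biprod_iff by (metis dm_ob cd_ob)

lemma biprod_commute: "biprod C X A B \<Longrightarrow> biprod C X B A"
  unfolding biprod_iff is_biprod_iff by (metis pls_commute cmp_ar dm_cmp cd_cmp)

definition inverse_pair :: "'m \<Rightarrow> 'm \<Rightarrow> 'o \<Rightarrow> 'o \<Rightarrow> bool" where
  "inverse_pair f g A B \<longleftrightarrow> f \<in> ar C \<and> g \<in> ar C \<and>
     dm C f = A \<and> cd C f = B \<and> dm C g = B \<and> cd C g = A \<and>
     cmp C g f = idn C A \<and> cmp C f g = idn C B"

lemma isomorphic_obj_iff: "isomorphic_obj C A B \<longleftrightarrow> (\<exists>f g. inverse_pair f g A B)"
  unfolding isomorphic_obj_def is_iso_arr_def Hom_def inverse_pair_def by fastforce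

lemma inverse_pair_cancel:
  "inverse_pair f g A B \<Longrightarrow> h \<in> ar C \<Longrightarrow> cd C h = B \<Longrightarrow> cmp C f (cmp C g h) = h"
  unfolding inverse_pair_def by (metis cmp_reassoc cmp_idn_left)

lemma isomorphic_obj_ob: "isomorphic_obj C A B \<Longrightarrow> A \<in> ob C \<and> B \<in> ob C"
  unfolding isomorphic_obj_iff inverse_pair_def by (metis dm_ob)

lemma isomorphic_obj_refl: "A \<in> ob C \<Longrightarrow> isomorphic_obj C A A"
  unfolding isomorphic_obj_iff inverse_pair_def by (rule exI[of _ "idn C A"], rule exI[of _ "idn C A"]) simp

lemma isomorphic_obj_sym: "isomorphic_obj C A B \<Longrightarrow> isomorphic_obj C B A"
  unfolding isomorphic_obj_iff inverse_pair_def by blast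

lemma isomorphic_obj_trans:
  assumes "isomorphic_obj C A B" "isomorphic_obj C B D"
  shows "isomorphic_obj C A D"
proof -
  obtain f g where f: "f \<in> ar C" "g \<in> ar C" "dm C f = A" "cd C f = B" "dm C g = B" "cd C g = A"
     "cmp C g f = idn C A" "cmp C f g = idn C B"
    using assms(1) unfolding isomorphic_obj_iff inverse_pair_def by blast
  obtain f' g' where f': "f' \<in> ar C" "g' \<in> ar C" "dm C f' = B" "cd C f' = D" "dm C g' = D" "cd C g' = B"
     "cmp C g' f' = idn C B" "cmp C f' g' = idn C D"
    using assms(2) unfolding isomorphic_obj_iff inverse_pair_def by blast
  have "cmp C g (cmp C g' (cmp C f' f)) = idn C A" "cmp C f' (cmp C f (cmp C g g')) = idn C D"
    using f f' by (simp_all add: cmp_reassoc[OF f'(7)] cmp_reassoc[OF f(8)])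
  then show ?thesis unfolding isomorphic_obj_iff inverse_pair_def
    by - (rule exI[of _ "cmp C f' f"], rule exI[of _ "cmp C g g'"], use f f' in simp)
qed

lemma zero_objs_isomorphic: "is_zero_obj C Z \<Longrightarrow> is_zero_obj C Z' \<Longrightarrow> isomorphic_obj C Z Z'"
  unfolding isomorphic_obj_iff inverse_pair_def
  by (rule exI[of _ "zro C Z Z'"], rule exI[of _ "zro C Z' Z"]) (auto simp: is_zero_obj_def)

lemma biprod_zero_obj: "A \<in> ob C \<Longrightarrow> is_zero_obj C Z \<Longrightarrow> biprod C A A Z"
  unfolding biprod_iff is_biprod_iff
  by (rule exI[of _ "idn C A"], rule exI[of _ "zro C A Z"], rule exI[of _ "idn C A"],
      rule exI[of _ "zro C Z A"]) (auto simp: is_zero_obj_def)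

lemma biprod_iso_sum:
  assumes "biprod C X A B" "isomorphic_obj C X' X"
  shows "biprod C X' A B"
proof -
  obtain p1 p2 i1 i2 where d: "is_biprod C X A B (p1, p2, i1, i2)"
    using assms(1) unfolding biprod_iff by blast
  obtain f g where f: "f \<in> ar C" "g \<in> ar C" "dm C f = X'" "cd C f = X" "dm C g = X" "cd C g = X'"
     "cmp C g f = idn C X'" "cmp C f g = idn C X"
    using assms(2) unfolding isomorphic_obj_iff inverse_pair_def by blast
  note d' = d[unfolded is_biprod_iff]
  have fg: "\<And>h. h \<in> ar C \<Longrightarrow> cd C h = X \<Longrightarrow> cmp C f (cmp C g h) = h"
    using f by (simp add: cmp_reassoc[OF f(8)])
  have unit: "cmp C g (cmp C (pls C (cmp C i1 p1) (cmp C i2 p2)) f) = idn C X'"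
    using d' f by simp
  have expand: "cmp C g (cmp C (pls C (cmp C i1 p1) (cmp C i2 p2)) f) =
     pls C (cmp C g (cmp C i1 (cmp C p1 f))) (cmp C g (cmp C i2 (cmp C p2 f)))"
    apply (subst cmp_pls_left) using d' f apply (simp_all only: cmp_ar dm_cmp cd_cmp) [6]
    apply (subst cmp_pls_right) using d' f by (simp_all only: cmp_ar dm_cmp cd_cmp cmp_assoc)
  show ?thesis unfolding biprod_iff is_biprod_iff
    by (rule exI[of _ "cmp C p1 f"], rule exI[of _ "cmp C p2 f"], rule exI[of _ "cmp C g i1"],
        rule exI[of _ "cmp C g i2"]) (use d' f unit expand in \<open>simp add: fg\<close>)
qed

lemma biprod_iso_left:
  assumes "biprod C X A B" "isomorphic_obj C A A'"
  shows "biprod C X A' B"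
proof -
  obtain p1 p2 i1 i2 where d: "is_biprod C X A B (p1, p2, i1, i2)"
    using assms(1) unfolding biprod_iff by blast
  obtain f g where f: "f \<in> ar C" "g \<in> ar C" "dm C f = A" "cd C f = A'" "dm C g = A'" "cd C g = A"
     "cmp C g f = idn C A" "cmp C f g = idn C A'"
    using assms(2) unfolding isomorphic_obj_iff inverse_pair_def by blast
  note d' = d[unfolded is_biprod_iff]
  have ob: "X \<in> ob C" "A \<in> ob C" "B \<in> ob C" "A' \<in> ob C" using d' f by (metis dm_ob cd_ob)+
  have canc: "\<And>h. h \<in> ar C \<Longrightarrow> cd C h = A \<Longrightarrow> cmp C g (cmp C f h) = h"
    "\<And>h. h \<in> ar C \<Longrightarrow> cd C h = A \<Longrightarrow> cmp C p1 (cmp C i1 h) = h"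
    "\<And>h. h \<in> ar C \<Longrightarrow> cd C h = A \<Longrightarrow> cmp C p2 (cmp C i1 h) = zro C (dm C h) B"
    using d' f ob by (simp_all add: cmp_reassoc)
  show ?thesis unfolding biprod_iff is_biprod_iff
    by (rule exI[of _ "cmp C f p1"], rule exI[of _ p2], rule exI[of _ "cmp C i1 g"], rule exI[of _ i2])
      (use d' f ob canc in simp)
qed

lemma biprod_iso_right: "biprod C X A B \<Longrightarrow> isomorphic_obj C B B' \<Longrightarrow> biprod C X A B'"
  by (metis biprod_commute biprod_iso_left)

lemma is_biprod_cancel:
  assumes "is_biprod C X A B (p1, p2, i1, i2)" and "h \<in> ar C"
  shows "cd C h = A \<Longrightarrow> cmp C p1 (cmp C i1 h) = h"
    and "cd C h = A \<Longrightarrow> cmp C p2 (cmp C i1 h) = zro C (dm C h) B"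
    and "cd C h = B \<Longrightarrow> cmp C p2 (cmp C i2 h) = h"
    and "cd C h = B \<Longrightarrow> cmp C p1 (cmp C i2 h) = zro C (dm C h) A"
  using assms unfolding is_biprod_iff by (metis cmp_reassoc cmp_idn_left cmp_zro_left cd_ob)+

lemma biprod_unique:
  assumes "biprod C X A B" "biprod C Y A B"
  shows "isomorphic_obj C X Y"
proof -
  obtain p1 p2 i1 i2 q1 q2 j1 j2 where d: "is_biprod C X A B (p1, p2, i1, i2)"
    and e: "is_biprod C Y A B (q1, q2, j1, j2)" using assms unfolding biprod_iff by blast
  note d' = d[unfolded is_biprod_iff] and e' = e[unfolded is_biprod_iff]
  note c = is_biprod_cancel[OF d] is_biprod_cancel[OF e]
  have ob: "X \<in> ob C" "Y \<in> ob C" "A \<in> ob C" "B \<in> ob C" using d' e' by (metis dm_ob cd_ob)+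
  let ?f = "pls C (cmp C j1 p1) (cmp C j2 p2)" and ?g = "pls C (cmp C i1 q1) (cmp C i2 q2)"
  have "cmp C ?g ?f = pls C (cmp C i1 p1) (cmp C i2 p2)"
    "cmp C ?f ?g = pls C (cmp C j1 q1) (cmp C j2 q2)"
    using d' e' ob by (simp_all add: c)
  then show ?thesis unfolding isomorphic_obj_iff inverse_pair_def
    by - (rule exI[of _ ?f], rule exI[of _ ?g], use d' e' in simp)
qed

lemma biprod_assoc:
  assumes "biprod C W D1 D2" "biprod C D1 A B" "biprod C Y B D2"
  shows "biprod C W A Y"
proof -
  obtain p1 p2 i1 i2 q1 q2 j1 j2 r1 r2 k1 k2 where d: "is_biprod C W D1 D2 (p1, p2, i1, i2)"
    and e: "is_biprod C D1 A B (q1, q2, j1, j2)" and f: "is_biprod C Y B D2 (r1, r2, k1, k2)"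
    using assms unfolding biprod_iff by blast
  note d' = d[unfolded is_biprod_iff] and e' = e[unfolded is_biprod_iff] and f' = f[unfolded is_biprod_iff]
  have ob: "W \<in> ob C" "D1 \<in> ob C" "D2 \<in> ob C" "A \<in> ob C" "B \<in> ob C" "Y \<in> ob C"
    using d' e' f' by (metis dm_ob cd_ob)+
  note c = is_biprod_cancel[OF d] is_biprod_cancel[OF e] is_biprod_cancel[OF f]
  let ?P1 = "cmp C q1 p1" and ?P2 = "pls C (cmp C k1 (cmp C q2 p1)) (cmp C k2 p2)"
  let ?I1 = "cmp C i1 j1" and ?I2 = "pls C (cmp C i1 (cmp C j2 r1)) (cmp C i2 r2)"
  have rel: "cmp C ?P1 ?I1 = idn C A" "cmp C ?P2 ?I2 = pls C (cmp C k1 r1) (cmp C k2 r2)"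
    "cmp C ?P1 ?I2 = zro C Y A" "cmp C ?P2 ?I1 = zro C A Y"
    using d' e' f' ob by (simp_all add: c)
  have I1P1: "cmp C ?I1 ?P1 = cmp C i1 (cmp C (cmp C j1 q1) p1)"
    and I2P2: "cmp C ?I2 ?P2 = pls C (cmp C i1 (cmp C (cmp C j2 q2) p1)) (cmp C i2 p2)"
    using d' e' f' ob by (simp_all add: c)
  have "cmp C i1 (cmp C (pls C (cmp C j1 q1) (cmp C j2 q2)) p1) =
     pls C (cmp C i1 (cmp C (cmp C j1 q1) p1)) (cmp C i1 (cmp C (cmp C j2 q2) p1))"
    apply (subst cmp_pls_left) using d' e' apply (simp_all only: cmp_ar dm_cmp cd_cmp) [6]
    apply (subst cmp_pls_right) using d' e' by (simp_all only: cmp_ar dm_cmp cd_cmp)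
  then have D1_part: "pls C (cmp C i1 (cmp C (cmp C j1 q1) p1)) (cmp C i1 (cmp C (cmp C j2 q2) p1)) =
      cmp C i1 p1"
    using d' e' by simp
  have sum_W: "pls C (cmp C ?I1 ?P1) (cmp C ?I2 ?P2) = idn C W"
    unfolding I1P1 I2P2
    apply (subst pls_assoc[symmetric])
    using d' e' f' apply (simp_all only: cmp_ar dm_cmp cd_cmp pls_ar dm_pls cd_pls) [7]
    unfolding D1_part using d' by simp
  show ?thesis unfolding biprod_iff is_biprod_iff
    apply (rule exI[of _ ?P1], rule exI[of _ ?P2], rule exI[of _ ?I1], rule exI[of _ ?I2], intro conjI)
    using d' e' f' ob rel sum_W by (simp_all del: cmp_pls_left cmp_pls_right cmp_assoc)
qed

lemma biprod_cong:
  "biprod C X A B \<Longrightarrow> biprod C Y A' B' \<Longrightarrow> isomorphic_obj C A A' \<Longrightarrow> isomorphic_obj C B B' \<Longrightarrow>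
   isomorphic_obj C X Y"
  by (meson biprod_iso_left biprod_iso_right biprod_unique)

lemma biprod_zero_obj_isomorphic: "biprod C X A Z \<Longrightarrow> is_zero_obj C Z \<Longrightarrow> isomorphic_obj C X A"
  by (meson biprod_zero_obj biprod_unique biprod_ob)

lemma iso_class_eq_if_isomorphic: "isomorphic_obj C A B \<Longrightarrow> iso_class C A = iso_class C B"
  unfolding iso_class_def using isomorphic_obj_sym isomorphic_obj_trans by blast

definition dsum :: "'o \<Rightarrow> 'o \<Rightarrow> 'o" where
  "dsum A B = (SOME X. biprod C X A B)"

lemma dsum_biprod:
  assumes "A \<in> ob C" "B \<in> ob C"
  shows "biprod C (dsum A B) A B"
proof -
  have "\<exists>X\<in>ob C. biprod C X A B" using additive assms unfolding is_additive_def by blast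
  then show ?thesis unfolding dsum_def by (metis someI_ex)
qed

lemma dsum_ob[simp]: "A \<in> ob C \<Longrightarrow> B \<in> ob C \<Longrightarrow> dsum A B \<in> ob C"
  using dsum_biprod biprod_ob by blast

lemma biprod_assoc_isomorphic:
  "biprod C W D1 D2 \<Longrightarrow> biprod C D1 A B \<Longrightarrow> biprod C V A Y \<Longrightarrow> biprod C Y B D2 \<Longrightarrow>
   isomorphic_obj C W V"
  using biprod_assoc biprod_unique by blast

lemma biprod_swap_inner:
  assumes "biprod C X A U" "biprod C U B D" "biprod C Y B V" "biprod C V A D"
  shows "isomorphic_obj C X Y"
proof -
  have ob: "A \<in> ob C" "B \<in> ob C" "D \<in> ob C" using assms biprod_ob by blast+
  let ?E = "dsum A B"
  let ?R = "dsum ?E D"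
  have E: "biprod C ?E A B" using dsum_biprod ob by blast
  have R: "biprod C ?R ?E D" using dsum_biprod ob by simp
  have "isomorphic_obj C X ?R" using biprod_unique[OF assms(1) biprod_assoc[OF R E assms(2)]] .
  moreover have "isomorphic_obj C ?R Y"
    using biprod_unique[OF biprod_assoc[OF R biprod_commute[OF E] assms(4)] assms(3)] .
  ultimately show ?thesis using isomorphic_obj_trans by blast
qed

lemma biprod_interchange:
  assumes "biprod C W D1 D2" "biprod C D1 A D" "biprod C D2 B D'"
    and "biprod C W' X K" "biprod C X A B" "biprod C K D D'"
  shows "isomorphic_obj C W W'"
proof -
  have ob: "A \<in> ob C" "B \<in> ob C" "D \<in> ob C" "D2 \<in> ob C" "K \<in> ob C"
    using assms biprod_ob by blast+
  let ?Y = "dsum D D2" and ?BK = "dsum B K"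
  have Y: "biprod C ?Y D D2" and BK: "biprod C ?BK B K" using dsum_biprod ob by blast+
  let ?V = "dsum A ?BK"
  have V: "biprod C ?V A ?BK" using dsum_biprod ob by simp
  have "isomorphic_obj C W ?V"
    using biprod_cong[OF biprod_assoc[OF assms(1,2) Y] V isomorphic_obj_refl[OF ob(1)]
        biprod_swap_inner[OF Y assms(3) BK assms(6)]] .
  moreover have "isomorphic_obj C W' ?V" using biprod_assoc_isomorphic[OF assms(4,5) V BK] .
  ultimately show ?thesis using isomorphic_obj_sym isomorphic_obj_trans by blast
qed

lemma biprod_rotate3:
  assumes "biprod C Y A U" "biprod C U B D" "biprod C Y' D V" "biprod C V B A"
  shows "isomorphic_obj C Y Y'"
proof -
  have ob: "A \<in> ob C" "B \<in> ob C" "D \<in> ob C" using assms biprod_ob by blast+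
  let ?U = "dsum D B" and ?V = "dsum A B"
  have U: "biprod C ?U D B" and V: "biprod C ?V A B" using dsum_biprod ob by blast+
  let ?Y1 = "dsum A ?U" and ?Y2 = "dsum D ?V"
  have Y1: "biprod C ?Y1 A ?U" and Y2: "biprod C ?Y2 D ?V" using dsum_biprod ob by simp_all
  have "isomorphic_obj C Y ?Y1"
    using biprod_cong[OF assms(1) Y1 isomorphic_obj_refl[OF ob(1)]
        biprod_unique[OF biprod_commute[OF assms(2)] U]] .
  moreover have "isomorphic_obj C ?Y1 ?Y2" using biprod_swap_inner[OF Y1 U Y2 V] .
  moreover have "isomorphic_obj C Y' ?Y2"
    using biprod_cong[OF assms(3) Y2 isomorphic_obj_refl[OF ob(3)]
        biprod_unique[OF biprod_commute[OF assms(4)] V]] .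
  ultimately show ?thesis using isomorphic_obj_trans isomorphic_obj_sym by blast
qed

lemma dsum_regroup_isomorphic:
  assumes "biprod C T A T'" "T'' \<in> ob C"
  shows "isomorphic_obj C (dsum T T'') (dsum A (dsum T'' T'))"
proof -
  have ob: "T \<in> ob C" "A \<in> ob C" "T' \<in> ob C" using assms(1) biprod_ob by blast+
  have "isomorphic_obj C (dsum T T'') (dsum A (dsum T' T''))"
    using biprod_assoc_isomorphic[OF dsum_biprod[OF ob(1) assms(2)] assms(1)
        dsum_biprod[OF ob(2) dsum_ob[OF ob(3) assms(2)]] dsum_biprod[OF ob(3) assms(2)]] .
  moreover have "isomorphic_obj C (dsum A (dsum T' T'')) (dsum A (dsum T'' T'))"
    using biprod_cong[OF dsum_biprod dsum_biprod isomorphic_obj_refl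
        biprod_unique[OF dsum_biprod biprod_commute[OF dsum_biprod]]] ob assms(2) by simp
  ultimately show ?thesis using isomorphic_obj_trans by blast
qed

definition zero_obj :: 'o where
  "zero_obj = (SOME Z. is_zero_obj C Z)"

lemma zero_obj: "is_zero_obj C zero_obj"
proof -
  have "\<exists>Z. is_zero_obj C Z" using additive unfolding is_additive_def by blast
  then show ?thesis unfolding zero_obj_def by (rule someI_ex)
qed

lemma zero_obj_ob[simp]: "zero_obj \<in> ob C"
  using zero_obj by (simp add: is_zero_obj_def)

end

locale n_angulated_cat = additive_cat C for C :: "('o, 'm) addcat" +
  fixes n :: nat and So :: "'o \<Rightarrow> 'o" and Sm :: "'m \<Rightarrow> 'm" and N :: "('o, 'm) nseq set"
  assumes n_angulated: "n_angulated n C So Sm N"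
begin

lemmas n_angulated_clauses = n_angulated[unfolded n_angulated_def]

lemma n_ge_3: "3 \<le> n"
  using n_angulated_clauses by (rule conjunct1)

lemma automorphism: "is_automorphism C So Sm"
  using n_angulated_clauses[THEN conjunct2, THEN conjunct2, THEN conjunct1] .

lemma angle_is_nseq: "S \<in> N \<Longrightarrow> is_nseq n C So S"
  using n_angulated_clauses[THEN conjunct2, THEN conjunct2, THEN conjunct2, THEN conjunct1] by blast

lemma angle_iso: "is_nseq n C So S \<Longrightarrow> T \<in> N \<Longrightarrow> is_nseq_iso n C Sm S T phi \<Longrightarrow> S \<in> N"
  using n_angulated_clauses[THEN conjunct2, THEN conjunct2, THEN conjunct2, THEN conjunct2,
      THEN conjunct2, THEN conjunct1] by blast

lemma trivial_angle: "A \<in> ob C \<Longrightarrow> is_zero_obj C Z \<Longrightarrow> trivial_nseq n C So A Z \<in> N"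
  using n_angulated_clauses[THEN conjunct2, THEN conjunct2, THEN conjunct2, THEN conjunct2,
      THEN conjunct2, THEN conjunct2, THEN conjunct1] by blast

lemma angle_rotate_iff: "is_nseq n C So S \<Longrightarrow> S \<in> N \<longleftrightarrow> rotate_nseq n C So Sm S \<in> N"
  using n_angulated_clauses[THEN conjunct2, THEN conjunct2, THEN conjunct2, THEN conjunct2,
      THEN conjunct2, THEN conjunct2, THEN conjunct2, THEN conjunct2, THEN conjunct1] by blast

lemma angle_mapping_cone:
  "S \<in> N \<Longrightarrow> T \<in> N \<Longrightarrow>
   f0 \<in> Hom C (fst S ! 0) (fst T ! 0) \<Longrightarrow> f1 \<in> Hom C (fst S ! 1) (fst T ! 1) \<Longrightarrow>
   cmp C (snd T ! 0) f0 = cmp C f1 (snd S ! 0) \<Longrightarrow>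
   \<exists>phi. phi ! 0 = f0 \<and> phi ! 1 = f1 \<and> is_nseq_morph n C Sm S T phi \<and>
     (\<exists>Cn\<in>N. is_mapping_cone n C So Sm S T phi Cn)"
  using n_angulated_clauses[THEN conjunct2, THEN conjunct2, THEN conjunct2, THEN conjunct2,
      THEN conjunct2, THEN conjunct2, THEN conjunct2, THEN conjunct2, THEN conjunct2, THEN conjunct2]
  by blast

lemma So_bij: "bij_betw So (ob C) (ob C)"
  and Sm_bij: "bij_betw Sm (ar C) (ar C)"
  using automorphism unfolding is_automorphism_def by blast+

lemma So_ob[simp]: "A \<in> ob C \<Longrightarrow> So A \<in> ob C"
  using So_bij bij_betwE by blast

lemma Sm_ar[simp]: "f \<in> ar C \<Longrightarrow> Sm f \<in> ar C"
  and dm_Sm[simp]: "f \<in> ar C \<Longrightarrow> dm C (Sm f) = So (dm C f)"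
  and cd_Sm[simp]: "f \<in> ar C \<Longrightarrow> cd C (Sm f) = So (cd C f)"
proof -
  assume f: "f \<in> ar C"
  have "\<forall>A\<in>ob C. \<forall>B\<in>ob C. \<forall>f\<in>Hom C A B. Sm f \<in> Hom C (So A) (So B)"
    using automorphism unfolding is_automorphism_def by blast
  moreover have "f \<in> Hom C (dm C f) (cd C f)" using f by (simp add: Hom_iff)
  ultimately have "Sm f \<in> Hom C (So (dm C f)) (So (cd C f))" using f by simp
  then show "Sm f \<in> ar C" "dm C (Sm f) = So (dm C f)" "cd C (Sm f) = So (cd C f)"
    by (simp_all add: Hom_iff)
qed

lemma Sm_idn[simp]: "A \<in> ob C \<Longrightarrow> Sm (idn C A) = idn C (So A)"
  using automorphism unfolding is_automorphism_def by blast

lemma Sm_cmp[simp]: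
  "f \<in> ar C \<Longrightarrow> g \<in> ar C \<Longrightarrow> cd C f = dm C g \<Longrightarrow> Sm (cmp C g f) = cmp C (Sm g) (Sm f)"
  using automorphism unfolding is_automorphism_def by blast

lemma Sm_zro[simp]:
  assumes "A \<in> ob C" "B \<in> ob C"
  shows "Sm (zro C A B) = zro C (So A) (So B)"
proof -
  let ?z = "Sm (zro C A B)"
  have "\<forall>f\<in>Hom C A B. \<forall>g\<in>Hom C A B. Sm (pls C f g) = pls C (Sm f) (Sm g)"
    using automorphism assms unfolding is_automorphism_def by blast
  then have "pls C ?z ?z = Sm (pls C (zro C A B) (zro C A B))"
    using assms by (simp add: Hom_iff del: pls_zro_left pls_zro_right)
  also have "\<dots> = ?z" using assms by simp
  finally have "?z = zro C (dm C ?z) (cd C ?z)" using assms by (intro pls_idem_eq_zro) auto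
  then show ?thesis using assms by simp
qed

definition So_inv :: "'o \<Rightarrow> 'o" where
  "So_inv = inv_into (ob C) So"

lemma So_inv_ob[simp]: "B \<in> ob C \<Longrightarrow> So_inv B \<in> ob C"
  unfolding So_inv_def using So_bij by (simp add: bij_betw_def inv_into_into)

lemma So_So_inv[simp]: "B \<in> ob C \<Longrightarrow> So (So_inv B) = B"
  unfolding So_inv_def by (rule bij_betw_inv_into_right[OF So_bij])

lemma So_inv_So[simp]: "A \<in> ob C \<Longrightarrow> So_inv (So A) = A"
  unfolding So_inv_def by (rule bij_betw_inv_into_left[OF So_bij])

lemma Sm_inj: "f \<in> ar C \<Longrightarrow> g \<in> ar C \<Longrightarrow> Sm f = Sm g \<Longrightarrow> f = g"
  using Sm_bij unfolding bij_betw_def inj_on_def by blast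

lemma Sm_preimage:
  assumes "g \<in> ar C" "A \<in> ob C" "B \<in> ob C" "dm C g = So A" "cd C g = So B"
  obtains f where "f \<in> ar C" "dm C f = A" "cd C f = B" "Sm f = g"
proof -
  have "g \<in> Sm ` ar C" using Sm_bij assms(1) by (simp add: bij_betw_def)
  then obtain f where f: "f \<in> ar C" "Sm f = g" by blast
  then have "So (dm C f) = So A" "So (cd C f) = So B"
    using assms dm_Sm[OF f(1)] cd_Sm[OF f(1)] by simp_all
  then have "So_inv (So (dm C f)) = A" "So_inv (So (cd C f)) = B" using assms by simp_all
  then have "dm C f = A" "cd C f = B" using f by simp_all
  then show ?thesis using f that by blast
qed

lemma zero_obj_So_inv: "is_zero_obj C Z \<Longrightarrow> is_zero_obj C (So_inv Z)"
proof -
  assume "is_zero_obj C Z"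
  then have Z: "Z \<in> ob C" "idn C Z = zro C Z Z" by (simp_all add: is_zero_obj_def)
  let ?W = "So_inv Z"
  have W: "?W \<in> ob C" using Z by simp
  have "Sm (idn C ?W) = Sm (zro C ?W ?W)" using W Z by simp
  then have "idn C ?W = zro C ?W ?W" using Sm_inj W by simp
  then show ?thesis using W by (simp add: is_zero_obj_def)
qed

lemma is_nseq_iff: "is_nseq n C So (X, a) \<longleftrightarrow> length X = n \<and> length a = n \<and> set X \<subseteq> ob C \<and>
     (\<forall>i. Suc i < n \<longrightarrow> a ! i \<in> ar C \<and> dm C (a ! i) = X ! i \<and> cd C (a ! i) = X ! Suc i) \<and>
     a ! (n - 1) \<in> ar C \<and> dm C (a ! (n - 1)) = X ! (n - 1) \<and> cd C (a ! (n - 1)) = So (X ! 0)"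
  by (simp add: is_nseq_def Hom_iff)

subsection \<open>Object sequences of $n$-angles\<close>

definition angle_objects :: "'o list \<Rightarrow> bool" where
  "angle_objects L \<longleftrightarrow> (\<exists>a. (L, a) \<in> N)"

lemma angle_objects_length: "angle_objects L \<Longrightarrow> length L = n"
  and angle_objects_set: "angle_objects L \<Longrightarrow> set L \<subseteq> ob C"
  unfolding angle_objects_def using angle_is_nseq is_nseq_iff by blast+

lemma angle_objects_ob: "angle_objects L \<Longrightarrow> i < n \<Longrightarrow> L ! i \<in> ob C"
  using angle_objects_length angle_objects_set nth_mem by blast

lemma angle_objects_trivial:
  "A \<in> ob C \<Longrightarrow> is_zero_obj C Z \<Longrightarrow> angle_objects (A # A # replicate (n - 2) Z)"
  unfolding angle_objects_def using trivial_angle[of A Z] unfolding trivial_nseq_def by blast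

lemma angle_objects_rotate: "angle_objects L \<Longrightarrow> angle_objects (tl L @ [So (hd L)])"
proof -
  assume "angle_objects L"
  then obtain a where a: "(L, a) \<in> N" unfolding angle_objects_def by blast
  then have "rotate_nseq n C So Sm (L, a) \<in> N" using angle_rotate_iff angle_is_nseq by blast
  then show ?thesis unfolding rotate_nseq_def angle_objects_def by auto
qed

lemma angle_objects_unrotate: "angle_objects L \<Longrightarrow> angle_objects (So_inv (last L) # butlast L)"
proof -
  assume "angle_objects L"
  then obtain a where a: "(L, a) \<in> N" unfolding angle_objects_def by blast
  note s = angle_is_nseq[OF a, unfolded is_nseq_iff]
  have len: "length L = n" "length a = n" using s by auto
  have ne: "L \<noteq> []" "a \<noteq> []" using len n_ge_3 by auto
  let ?Y = "L ! (n - 1)"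
  have last: "last L = ?Y" "last a = a ! (n - 1)" using len ne by (simp_all add: last_conv_nth)
  have obL: "\<And>i. i < n \<Longrightarrow> L ! i \<in> ob C" using s len nth_mem by blast
  have Y: "?Y \<in> ob C" and L0: "L ! 0 \<in> ob C" using obL n_ge_3 by auto
  have an: "a ! (n - 1) \<in> ar C" "dm C (a ! (n - 1)) = ?Y" "cd C (a ! (n - 1)) = So (L ! 0)"
    using s by auto
  \<comment> \<open>the last map of the rotation is $(-1)^n \Sigma$ of the first one\<close>
  let ?g = "if even n then a ! (n - 1) else ngt C (a ! (n - 1))"
  have g: "?g \<in> ar C" "dm C ?g = So (So_inv ?Y)" "cd C ?g = So (L ! 0)"
    using an Y by simp_all
  obtain f where f: "f \<in> ar C" "dm C f = So_inv ?Y" "cd C f = L ! 0" "Sm f = ?g"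
    using Sm_preimage[OF g(1) So_inv_ob[OF Y] L0 g(2,3)] by blast
  let ?X = "So_inv ?Y # butlast L" and ?b = "f # butlast a"
  have "butlast L @ [?Y] = L" "butlast a @ [a ! (n - 1)] = a"
    using append_butlast_last_id[OF ne(1)] append_butlast_last_id[OF ne(2)] last by simp_all
  then have rot: "rotate_nseq n C So Sm (?X, ?b) = (L, a)"
    unfolding rotate_nseq_def using f an Y by simp
  have maps: "?b ! i \<in> ar C \<and> dm C (?b ! i) = ?X ! i \<and> cd C (?b ! i) = ?X ! Suc i"
    if i: "Suc i < n" for i
  proof (cases i)
    case 0 then show ?thesis using f len n_ge_3 by (simp add: nth_butlast)
  next
    case (Suc j)
    then show ?thesis using s i len by (simp add: nth_butlast)
  qed
  have n1: "n - 1 = Suc (n - 2)" using n_ge_3 by simp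
  have "a ! (n - 2) \<in> ar C \<and> dm C (a ! (n - 2)) = L ! (n - 2) \<and> cd C (a ! (n - 2)) = L ! (n - 1)"
    using s n_ge_3 n1 by auto
  then have "?b ! (n - 1) \<in> ar C \<and> dm C (?b ! (n - 1)) = ?X ! (n - 1) \<and>
      cd C (?b ! (n - 1)) = So (?X ! 0)"
    using len n_ge_3 Y by (simp add: n1 nth_butlast numeral_2_eq_2)
  moreover have "set ?X \<subseteq> ob C" using s Y by (auto dest: in_set_butlastD)
  ultimately have "is_nseq n C So (?X, ?b)"
    unfolding is_nseq_iff using maps len n_ge_3 by auto
  then have "(?X, ?b) \<in> N" using angle_rotate_iff rot a by simp
  then show ?thesis unfolding angle_objects_def last by blast
qed

lemma inverse_pair_Sm: "inverse_pair f g A B \<Longrightarrow> inverse_pair (Sm f) (Sm g) (So A) (So B)"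
  unfolding inverse_pair_def by (metis Sm_ar dm_Sm cd_Sm Sm_cmp Sm_idn dm_ob)

definition transport_maps :: "(nat \<Rightarrow> 'm) \<Rightarrow> (nat \<Rightarrow> 'm) \<Rightarrow> 'm list \<Rightarrow> 'm list" where
  "transport_maps F G a = map (\<lambda>i. if Suc i < n then cmp C (G (Suc i)) (cmp C (a ! i) (F i))
      else cmp C (Sm (G 0)) (cmp C (a ! i) (F i))) [0..<n]"

lemma transport_maps_nth:
  "Suc i < n \<Longrightarrow> transport_maps F G a ! i = cmp C (G (Suc i)) (cmp C (a ! i) (F i))"
  "transport_maps F G a ! (n - 1) = cmp C (Sm (G 0)) (cmp C (a ! (n - 1)) (F (n - 1)))"
  unfolding transport_maps_def using n_ge_3 by simp_all

lemma is_nseq_transport: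
  assumes s: "is_nseq n C So (L, a)" and len': "length L' = n"
    and FG: "\<And>i. i < n \<Longrightarrow> inverse_pair (F i) (G i) (L' ! i) (L ! i)"
  shows "is_nseq n C So (L', transport_maps F G a)"
proof -
  note s' = s[unfolded is_nseq_iff] and FGi = FG[unfolded inverse_pair_def]
  let ?b = "transport_maps F G a"
  have n: "n - 1 < n" "0 < n" using n_ge_3 by auto
  have "length ?b = n" unfolding transport_maps_def by simp
  moreover have "set L' \<subseteq> ob C" using FGi dm_ob len' by (metis in_set_conv_nth subsetI)
  moreover have "?b ! i \<in> ar C \<and> dm C (?b ! i) = L' ! i \<and> cd C (?b ! i) = L' ! Suc i"
    if i: "Suc i < n" for i
    using transport_maps_nth(1)[OF i] s' FGi[of i] FGi[OF i] i by simp
  moreover have "?b ! (n - 1) \<in> ar C \<and> dm C (?b ! (n - 1)) = L' ! (n - 1) \<and>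
      cd C (?b ! (n - 1)) = So (L' ! 0)"
    unfolding transport_maps_nth(2) using s' FGi[OF n(1)] FGi[OF n(2)] by simp
  ultimately show ?thesis unfolding is_nseq_iff using len' by blast
qed

lemma is_nseq_iso_transport:
  assumes s: "is_nseq n C So (L, a)"
    and FG: "\<And>i. i < n \<Longrightarrow> inverse_pair (F i) (G i) (L' ! i) (L ! i)"
  shows "is_nseq_iso n C Sm (L', transport_maps F G a) (L, a) (map F [0..<n])"
  unfolding is_nseq_iso_def is_nseq_morph_def
proof (simp only: prod.case, intro conjI allI impI)
  note s' = s[unfolded is_nseq_iff] and FGi = FG[unfolded inverse_pair_def]
  have n: "n - 1 < n" "0 < n" using n_ge_3 by auto
  {
    fix i assume i: "i < n"
    show "map F [0..<n] ! i \<in> Hom C (L' ! i) (L ! i)" using FGi[OF i] i by (simp add: Hom_iff)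
    show "is_iso_arr C (map F [0..<n] ! i)" unfolding is_iso_arr_def using FGi[OF i] i
      by (auto simp: Hom_iff)
  next
    fix i assume i: "Suc i < n"
    show "cmp C (a ! i) (map F [0..<n] ! i) = cmp C (map F [0..<n] ! Suc i) (transport_maps F G a ! i)"
      using i transport_maps_nth(1)[OF i] s' FGi[of i] FGi[OF i] inverse_pair_cancel[OF FG[OF i]]
      by simp
  }
  show "cmp C (a ! (n - 1)) (map F [0..<n] ! (n - 1)) =
      cmp C (Sm (map F [0..<n] ! 0)) (transport_maps F G a ! (n - 1))"
    unfolding transport_maps_nth(2)
    using n s' FGi[OF n(1)] FGi[OF n(2)] inverse_pair_cancel[OF inverse_pair_Sm[OF FG[OF n(2)]]]
    by simp
qed simp

lemma angle_objects_iso: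
  assumes L: "angle_objects L" and len': "length L' = n"
    and iso: "\<And>i. i < n \<Longrightarrow> isomorphic_obj C (L' ! i) (L ! i)"
  shows "angle_objects L'"
proof -
  obtain a where a: "(L, a) \<in> N" using L unfolding angle_objects_def by blast
  have "\<forall>i. \<exists>f g. i < n \<longrightarrow> inverse_pair f g (L' ! i) (L ! i)"
    using iso unfolding isomorphic_obj_iff by blast
  then obtain F G where FG: "\<And>i. i < n \<Longrightarrow> inverse_pair (F i) (G i) (L' ! i) (L ! i)"
    by metis
  note s = angle_is_nseq[OF a]
  have "(L', transport_maps F G a) \<in> N"
    using angle_iso[OF is_nseq_transport[OF s len' FG] a is_nseq_iso_transport[OF s FG]] .
  then show ?thesis unfolding angle_objects_def by blast
qed

lemma angle_objects_cong: "angle_objects L \<Longrightarrow> length L' = n \<Longrightarrow> (\<And>i. i < n \<Longrightarrow> L' ! i = L ! i) \<Longrightarrow>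
    angle_objects L'"
  using angle_objects_iso[of L L'] isomorphic_obj_refl angle_objects_ob[of L] by simp

text \<open>Direct sums are obtained from (N4): the mapping cone of the zero morphism between two
  $n$-angles is their direct sum, shifted by one rotation in the first summand.\<close>

lemma angle_objects_cone:
  assumes L: "angle_objects L" and M: "angle_objects M"
  obtains D where "angle_objects D" "length D = n"
    "\<And>i. i < n \<Longrightarrow> biprod C (D ! i) (if Suc i < n then L ! Suc i else So (L ! 0)) (M ! i)"
proof -
  obtain a where a: "(L, a) \<in> N" using L unfolding angle_objects_def by blast
  obtain b where b: "(M, b) \<in> N" using M unfolding angle_objects_def by blast
  note sa = angle_is_nseq[OF a, unfolded is_nseq_iff]
    and sb = angle_is_nseq[OF b, unfolded is_nseq_iff]
  have "L ! 0 \<in> ob C" "L ! 1 \<in> ob C" "M ! 0 \<in> ob C" "M ! 1 \<in> ob C"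
    using angle_objects_ob[OF L] angle_objects_ob[OF M] n_ge_3 by auto
  moreover have "a ! 0 \<in> ar C" "dm C (a ! 0) = L ! 0" "cd C (a ! 0) = L ! 1"
    "b ! 0 \<in> ar C" "dm C (b ! 0) = M ! 0" "cd C (b ! 0) = M ! 1"
    using sa sb n_ge_3 by auto
  ultimately obtain phi Cn where Cn: "Cn \<in> N" "is_mapping_cone n C So Sm (L, a) (M, b) phi Cn"
    using angle_mapping_cone[OF a b, of "zro C (L ! 0) (M ! 0)" "zro C (L ! 1) (M ! 1)"]
    by (auto simp: Hom_iff)
  obtain D c where Dc: "Cn = (D, c)" by (cases Cn)
  obtain d where "length D = n"
    "\<forall>i<n. is_biprod C (D ! i) (if Suc i < n then L ! Suc i else So (L ! 0)) (M ! i) (d i)"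
    using Cn(2) unfolding is_mapping_cone_def Dc by auto
  moreover have "angle_objects D" using Cn(1) Dc unfolding angle_objects_def by blast
  ultimately show ?thesis using that unfolding biprod_def by blast
qed

lemma angle_objects_biprod:
  assumes L: "angle_objects L" and M: "angle_objects M" and len: "length W = n"
    and W: "\<And>i. i < n \<Longrightarrow> biprod C (W ! i) (L ! i) (M ! i)"
  shows "angle_objects W"
proof -
  let ?L = "So_inv (last L) # butlast L"
  obtain D where D: "angle_objects D" "length D = n"
    "\<And>i. i < n \<Longrightarrow> biprod C (D ! i) (if Suc i < n then ?L ! Suc i else So (?L ! 0)) (M ! i)"
    using angle_objects_cone[OF angle_objects_unrotate[OF L] M] by blast
  have lenL: "length L = n" using angle_objects_length[OF L] .
  have last: "last L = L ! (n - 1)" using lenL n_ge_3 by (subst last_conv_nth) auto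
  have "biprod C (D ! i) (L ! i) (M ! i)" if i: "i < n" for i
  proof (cases "Suc i < n")
    case True
    then show ?thesis using D(3)[OF i] lenL by (simp add: nth_butlast)
  next
    case False
    then have "i = n - 1" using i by simp
    then show ?thesis using D(3)[OF i] i last angle_objects_ob[OF L, of "n - 1"] by simp
  qed
  then show ?thesis using angle_objects_iso[OF D(1) len] W biprod_unique by blast
qed

subsection \<open>The relation $\sim$\<close>

abbreviation sim :: "'o \<Rightarrow> 'o \<Rightarrow> bool" where
  "sim \<equiv> sim_rel n C N"

lemma sim_ob: "sim A B \<Longrightarrow> A \<in> ob C \<and> B \<in> ob C"
  unfolding sim_rel_def by blast

lemma simI:
  assumes P: "angle_objects P" and Q: "angle_objects Q"
    and "biprod C (P ! 0) A K" "biprod C (Q ! 0) B K"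
    and tl: "\<And>i. 0 < i \<Longrightarrow> i < n \<Longrightarrow> isomorphic_obj C (Q ! i) (P ! i)"
  shows "sim A B"
proof -
  have lP: "length P = n" and lQ: "length Q = n" using angle_objects_length P Q by auto
  let ?Q = "Q ! 0 # tl P"
  have "isomorphic_obj C (?Q ! i) (Q ! i)" if i: "i < n" for i
  proof (cases i)
    case 0 then show ?thesis using angle_objects_ob[OF Q] n_ge_3 isomorphic_obj_refl by simp
  next
    case (Suc j)
    then show ?thesis using tl[of i] i lP isomorphic_obj_sym by (simp add: nth_tl)
  qed
  then have "angle_objects ?Q" using angle_objects_iso[OF Q] lP n_ge_3 by simp
  moreover have "P = P ! 0 # tl P" using lP n_ge_3 by (cases P) auto
  moreover have "A \<in> ob C" "B \<in> ob C" "K \<in> ob C" using assms(3,4) biprod_ob by blast+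
  ultimately show ?thesis using P assms(3,4) lP unfolding sim_rel_def angle_objects_def
    by (metis length_tl)
qed

lemma simE:
  assumes "sim A B"
  obtains K P Q where "angle_objects P" "angle_objects Q"
    "biprod C (P ! 0) A K" "biprod C (Q ! 0) B K" "tl P = tl Q"
proof -
  obtain K Cs D D' a b where "biprod C D A K" "biprod C D' B K"
    "(D # Cs, a) \<in> N" "(D' # Cs, b) \<in> N" using assms unfolding sim_rel_def by blast
  then show ?thesis using that[of "D # Cs" "D' # Cs" K] unfolding angle_objects_def by auto
qed

lemma sim_refl: "A \<in> ob C \<Longrightarrow> sim A A"
  using simI[OF angle_objects_trivial[OF _ zero_obj] angle_objects_trivial[OF _ zero_obj]]
    biprod_zero_obj[OF _ zero_obj] isomorphic_obj_refl angle_objects_ob angle_objects_trivial zero_obj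
  by (metis nth_Cons_0)

lemma sim_sym: "sim A B \<Longrightarrow> sim B A"
  unfolding sim_rel_def by blast

lemma sim_iso_left:
  assumes "sim A B" "isomorphic_obj C A A'"
  shows "sim A' B"
proof -
  obtain K P Q where h: "angle_objects P" "angle_objects Q" "biprod C (P ! 0) A K"
    "biprod C (Q ! 0) B K" "tl P = tl Q"
    using simE[OF assms(1)] by blast
  have "length P = n" "length Q = n" using angle_objects_length h by auto
  then have "isomorphic_obj C (Q ! i) (P ! i)" if "0 < i" "i < n" for i
    using that nth_eq_if_tl_eq[OF _ h(5)] angle_objects_ob[OF h(1)] isomorphic_obj_refl by metis
  then show ?thesis using simI[OF h(1,2) biprod_iso_left[OF h(3) assms(2)] h(4)] by blast
qed

lemma sim_if_isomorphic: "isomorphic_obj C A B \<Longrightarrow> sim A B"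
  using sim_refl sim_iso_left sim_sym isomorphic_obj_ob by metis

lemma angle_objects_dsum:
  assumes "angle_objects P" "angle_objects P'"
  shows "angle_objects (map (\<lambda>i. dsum (P ! i) (P' ! i)) [0..<n])"
  using angle_objects_biprod[OF assms] dsum_biprod angle_objects_ob[OF assms(1)]
    angle_objects_ob[OF assms(2)] by simp

lemma sim_if_dsum_angles:
  assumes P: "angle_objects P" and Q: "angle_objects Q" and "tl P = tl Q"
    and P': "angle_objects P'" and Q': "angle_objects Q'" and "tl P' = tl Q'"
    and "biprod C (dsum (P ! 0) (P' ! 0)) A K" "biprod C (dsum (Q ! 0) (Q' ! 0)) B K"
  shows "sim A B"
proof -
  let ?W = "map (\<lambda>i. dsum (P ! i) (P' ! i)) [0..<n]" and ?W' = "map (\<lambda>i. dsum (Q ! i) (Q' ! i)) [0..<n]"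
  have l: "length P = n" "length Q = n" "length P' = n" "length Q' = n"
    using angle_objects_length P Q P' Q' by auto
  have "isomorphic_obj C (?W' ! i) (?W ! i)" if i: "0 < i" "i < n" for i
  proof -
    have "Q ! i = P ! i" "Q' ! i = P' ! i"
      using nth_eq_if_tl_eq l assms(3,6) i by (metis l)+
    then show ?thesis using i isomorphic_obj_refl angle_objects_ob[OF P] angle_objects_ob[OF P'] by simp
  qed
  moreover have "?W ! 0 = dsum (P ! 0) (P' ! 0)" "?W' ! 0 = dsum (Q ! 0) (Q' ! 0)" using n_ge_3 by simp_all
  ultimately show ?thesis
    using simI[OF angle_objects_dsum[OF P P'] angle_objects_dsum[OF Q Q'], of A K B] assms(7,8) by simp
qed

lemma sim_trans:
  assumes "sim A B" "sim B D"
  shows "sim A D"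
proof -
  obtain K P Q where h: "angle_objects P" "angle_objects Q" "biprod C (P ! 0) A K"
    "biprod C (Q ! 0) B K" "tl P = tl Q"
    using simE[OF assms(1)] by blast
  obtain K' P' Q' where h': "angle_objects P'" "angle_objects Q'" "biprod C (P' ! 0) B K'"
    "biprod C (Q' ! 0) D K'" "tl P' = tl Q'"
    using simE[OF assms(2)] by blast
  have ob: "P ! 0 \<in> ob C" "P' ! 0 \<in> ob C" "Q ! 0 \<in> ob C" "Q' ! 0 \<in> ob C" "K \<in> ob C" "K' \<in> ob C"
    using h h' biprod_ob by blast+
  let ?Y = "dsum K (P' ! 0)" and ?Y' = "dsum K' (Q ! 0)"
  have Y: "biprod C ?Y K (P' ! 0)" and Y': "biprod C ?Y' K' (Q ! 0)" using dsum_biprod ob by blast+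
  have "biprod C (dsum (P ! 0) (P' ! 0)) A ?Y"
    using biprod_assoc[OF dsum_biprod[OF ob(1,2)] h(3) Y] .
  moreover have "biprod C (dsum (Q ! 0) (Q' ! 0)) D ?Y'"
    using biprod_assoc[OF biprod_commute[OF dsum_biprod[OF ob(3,4)]] h'(4) Y'] .
  then have "biprod C (dsum (Q ! 0) (Q' ! 0)) D ?Y"
    using biprod_iso_right biprod_rotate3[OF Y' h(4) Y h'(3)] by blast
  ultimately show ?thesis using sim_if_dsum_angles[OF h(1,2,5) h'(1,2,5)] by blast
qed

lemma sim_biprod:
  assumes "sim A A'" "sim B B'" and X: "biprod C X A B" and X': "biprod C X' A' B'"
  shows "sim X X'"
proof -
  obtain K P Q where h: "angle_objects P" "angle_objects Q" "biprod C (P ! 0) A K"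
    "biprod C (Q ! 0) A' K" "tl P = tl Q"
    using simE[OF assms(1)] by blast
  obtain K' P' Q' where h': "angle_objects P'" "angle_objects Q'" "biprod C (P' ! 0) B K'"
    "biprod C (Q' ! 0) B' K'" "tl P' = tl Q'"
    using simE[OF assms(2)] by blast
  have ob: "P ! 0 \<in> ob C" "P' ! 0 \<in> ob C" "Q ! 0 \<in> ob C" "Q' ! 0 \<in> ob C" "K \<in> ob C" "K' \<in> ob C"
    "X \<in> ob C" "X' \<in> ob C"
    using h h' X X' biprod_ob by blast+
  let ?K = "dsum K K'"
  have K: "biprod C ?K K K'" and Kob: "?K \<in> ob C" using dsum_biprod ob by auto
  have "isomorphic_obj C (dsum (P ! 0) (P' ! 0)) (dsum X ?K)"
    using biprod_interchange[OF dsum_biprod[OF ob(1,2)] h(3) h'(3) dsum_biprod[OF ob(7) Kob] X K] .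
  then have "biprod C (dsum (P ! 0) (P' ! 0)) X ?K"
    using biprod_iso_sum[OF dsum_biprod[OF ob(7) Kob]] by blast
  moreover have "isomorphic_obj C (dsum (Q ! 0) (Q' ! 0)) (dsum X' ?K)"
    using biprod_interchange[OF dsum_biprod[OF ob(3,4)] h(4) h'(4) dsum_biprod[OF ob(8) Kob] X' K] .
  then have "biprod C (dsum (Q ! 0) (Q' ! 0)) X' ?K"
    using biprod_iso_sum[OF dsum_biprod[OF ob(8) Kob]] by blast
  ultimately show ?thesis using sim_if_dsum_angles[OF h(1,2,5) h'(1,2,5)] by blast
qed

subsection \<open>Alternating direct sums along an $n$-angle\<close>

definition adjacent_seq :: "nat \<Rightarrow> 'o \<Rightarrow> 'o list" where
  "adjacent_seq k Y = map (\<lambda>j. if j = k \<or> j = Suc k then Y else zero_obj) [0..<n]"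

lemma angle_objects_adjacent: "k \<le> n - 2 \<Longrightarrow> Y \<in> ob C \<Longrightarrow> angle_objects (adjacent_seq k Y)"
proof (induction k)
  case 0
  show ?case
    by (rule angle_objects_cong[OF angle_objects_trivial[OF 0(2) zero_obj]])
      (auto simp: adjacent_seq_def nth_Cons')
next
  case (Suc k)
  let ?L = "adjacent_seq k Y"
  have len: "length ?L = n" by (simp add: adjacent_seq_def)
  have "last ?L = zero_obj" using Suc(2) n_ge_3 len by (subst last_conv_nth) (auto simp: adjacent_seq_def)
  then have U: "angle_objects (So_inv zero_obj # butlast ?L)"
    using angle_objects_unrotate[OF Suc(1)] Suc(2,3) by simp
  show ?case
  proof (rule angle_objects_iso[OF U])
    fix i assume i: "i < n"
    show "isomorphic_obj C (adjacent_seq (Suc k) Y ! i) ((So_inv zero_obj # butlast ?L) ! i)"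
    proof (cases i)
      case 0
      then show ?thesis using zero_objs_isomorphic[OF zero_obj zero_obj_So_inv[OF zero_obj]] i
        by (simp add: adjacent_seq_def)
    next
      case (Suc j)
      then show ?thesis using isomorphic_obj_refl Suc.prems(2) i len
        by (simp add: nth_butlast adjacent_seq_def)
    qed
  qed (simp add: adjacent_seq_def)
qed

text \<open>The sequence $w_0,\ w_0 \oplus w_1,\ \ldots,\ w_{m-2} \oplus w_{m-1},\ w_{m-1},\ 0, \ldots, 0$,
  i.e.\ the sum of the adjacent sequences of $w_0, \ldots, w_{m-1}$.\<close>

definition telescope_seq :: "(nat \<Rightarrow> 'o) \<Rightarrow> nat \<Rightarrow> 'o list" where
  "telescope_seq w m = map (\<lambda>j. if j = 0 then (if m = 0 then zero_obj else w 0)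
      else if j < m then dsum (w (j - 1)) (w j) else if j = m then w (j - 1) else zero_obj) [0..<n]"

lemma angle_objects_telescope:
  assumes w: "\<And>j. j \<le> n - 2 \<Longrightarrow> w j \<in> ob C"
  shows "m \<le> n - 1 \<Longrightarrow> angle_objects (telescope_seq w m)"
proof (induction m)
  case 0
  show ?case
    by (rule angle_objects_cong[OF angle_objects_trivial[OF zero_obj_ob zero_obj]])
      (auto simp: telescope_seq_def nth_Cons')
next
  case (Suc m)
  have m: "m \<le> n - 2" using Suc.prems by simp
  have wm: "w m \<in> ob C" and w0: "w 0 \<in> ob C" using w m by auto
  have IH: "angle_objects (telescope_seq w m)" using Suc by simp
  show ?case
  proof (rule angle_objects_biprod[OF IH angle_objects_adjacent[OF m wm]])
    fix i assume i: "i < n"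
    consider "i = 0" "m = 0" | "i = 0" "m > 0" | "0 < i" "i < m" | "0 < i" "i = m" | "i = Suc m"
      | "i > Suc m"
      by linarith
    then show "biprod C (telescope_seq w (Suc m) ! i) (telescope_seq w m ! i) (adjacent_seq m (w m) ! i)"
    proof cases
      case 1 then show ?thesis using i biprod_commute[OF biprod_zero_obj[OF w0 zero_obj]]
        by (simp add: telescope_seq_def adjacent_seq_def)
    next
      case 2 then show ?thesis using i biprod_zero_obj[OF w0 zero_obj]
        by (simp add: telescope_seq_def adjacent_seq_def)
    next
      case 3
      then have "w (i - 1) \<in> ob C" "w i \<in> ob C" using w m by auto
      then show ?thesis using i 3 biprod_zero_obj[OF dsum_ob zero_obj]
        by (simp add: telescope_seq_def adjacent_seq_def)
    next
      case 4
      then have "w (i - 1) \<in> ob C" "w i \<in> ob C" using w m by auto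
      then show ?thesis using i 4 dsum_biprod by (simp add: telescope_seq_def adjacent_seq_def)
    next
      case 5 then show ?thesis using i biprod_commute[OF biprod_zero_obj[OF wm zero_obj]]
        by (simp add: telescope_seq_def adjacent_seq_def)
    next
      case 6 then show ?thesis using i biprod_zero_obj[OF zero_obj_ob zero_obj]
        by (simp add: telescope_seq_def adjacent_seq_def)
    qed
  qed (simp add: telescope_seq_def)
qed

function alt_dsum :: "'o list \<Rightarrow> nat \<Rightarrow> 'o" where
  "alt_dsum X k = (if n \<le> k then zero_obj else dsum (X ! k) (alt_dsum X (Suc (Suc k))))"
  by auto
termination by (relation "measure (\<lambda>(X, k). n - k)") auto

declare alt_dsum.simps[simp del]

lemma alt_dsum_beyond: "n \<le> k \<Longrightarrow> alt_dsum X k = zero_obj"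
  by (simp add: alt_dsum.simps)

lemma alt_dsum_step: "k < n \<Longrightarrow> alt_dsum X k = dsum (X ! k) (alt_dsum X (Suc (Suc k)))"
  by (subst alt_dsum.simps) simp

lemma alt_dsum_ob: "(\<And>i. i < n \<Longrightarrow> X ! i \<in> ob C) \<Longrightarrow> alt_dsum X k \<in> ob C"
  by (induction X k rule: alt_dsum.induct) (simp add: alt_dsum.simps)

lemma alt_dsum_biprod:
  "(\<And>i. i < n \<Longrightarrow> X ! i \<in> ob C) \<Longrightarrow> k < n \<Longrightarrow>
   biprod C (alt_dsum X k) (X ! k) (alt_dsum X (Suc (Suc k)))"
  using alt_dsum_step dsum_biprod alt_dsum_ob by simp

text \<open>The even and odd terms of an $n$-angle have $\sim$-equivalent sums: with $T_j$ the
  alternating sum from $j$, the sequences $X \oplus (T_2, T_2 \oplus T_3, \ldots)$ and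
  $(T_1, T_1 \oplus T_2, \ldots)$ are both $n$-angles, they start with $T_0$ and $T_1$, and
  $X_i \oplus T_{i+1} \oplus T_{i+2} \cong T_i \oplus T_{i+1}$ in all later positions.\<close>

lemma sim_alt_dsum_even_odd:
  assumes X: "angle_objects X"
  shows "sim (alt_dsum X 0) (alt_dsum X 1)"
proof -
  have Xob: "\<And>i. i < n \<Longrightarrow> X ! i \<in> ob C" using angle_objects_ob[OF X] .
  note Tob = alt_dsum_ob[OF Xob]
  define u where "u j = alt_dsum X (Suc (Suc j))" for j
  define v where "v j = alt_dsum X (Suc j)" for j
  let ?P = "map (\<lambda>i. dsum (X ! i) (telescope_seq u (n - 1) ! i)) [0..<n]"
  let ?Q = "telescope_seq v (n - 1)"
  have P: "angle_objects ?P"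
    using angle_objects_dsum[OF X angle_objects_telescope[of u "n - 1"]] Tob unfolding u_def by simp
  have Q: "angle_objects ?Q" using angle_objects_telescope[of v "n - 1"] Tob unfolding v_def by simp
  have n: "n - 1 = Suc (n - 2)" "0 < n" using n_ge_3 by auto
  have start: "?P ! 0 = alt_dsum X 0" "?Q ! 0 = alt_dsum X 1"
    using n by (simp_all add: telescope_seq_def u_def v_def alt_dsum_step)
  have "isomorphic_obj C (?Q ! i) (?P ! i)" if i: "0 < i" "i < n" for i
  proof (cases "i < n - 1")
    case True
    then show ?thesis using i dsum_regroup_isomorphic[OF alt_dsum_biprod[OF Xob] Tob]
      by (simp add: telescope_seq_def u_def v_def)
  next
    case False
    then have "i = n - 1" using i by arith
    then have "?Q ! i = ?P ! i" using n n_ge_3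
      by (simp add: telescope_seq_def u_def v_def alt_dsum_step alt_dsum_beyond)
    then show ?thesis using angle_objects_ob[OF P] i isomorphic_obj_refl by simp
  qed
  moreover have "biprod C (?P ! 0) (alt_dsum X 0) zero_obj" "biprod C (?Q ! 0) (alt_dsum X 1) zero_obj"
    using start biprod_zero_obj[OF Tob zero_obj] by simp_all
  ultimately show ?thesis using simI[OF P Q] by blast
qed

end

locale odd_n_angulated_cat = n_angulated_cat C n So Sm N
  for C :: "('o, 'm) addcat" and n So Sm N +
  assumes odd_n: "odd n"
begin

definition rotated_trivial_seq :: "'o \<Rightarrow> 'o list" where
  "rotated_trivial_seq A = A # replicate (n - 2) zero_obj @ [So A]"

lemma angle_objects_rotated_trivial: "A \<in> ob C \<Longrightarrow> angle_objects (rotated_trivial_seq A)"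
  using angle_objects_rotate[OF angle_objects_trivial[OF _ zero_obj]]
  by (simp add: rotated_trivial_seq_def)

lemma rotated_trivial_seq_nth:
  assumes "k < n"
  shows "rotated_trivial_seq A ! k = (if k = 0 then A else if k = n - 1 then So A else zero_obj)"
proof -
  have "n - 1 = Suc (n - 2)" using n_ge_3 by simp
  then show ?thesis using assms nth_append_length[of "replicate (n - 2) zero_obj" "So A"]
    by (cases k) (auto simp: rotated_trivial_seq_def nth_append)
qed

text \<open>This is where odd $n$ is needed: $\Sigma A$ sits at the even index $n - 1$.\<close>

lemma alt_dsum_rotated_trivial:
  assumes A: "A \<in> ob C"
  shows "0 < k \<Longrightarrow> isomorphic_obj C (alt_dsum (rotated_trivial_seq A) k)
    (if even k \<and> k \<le> n - 1 then So A else zero_obj)"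
proof (induction "rotated_trivial_seq A" k rule: alt_dsum.induct)
  case (1 k)
  let ?W = "rotated_trivial_seq A"
  show ?case
  proof (cases "n \<le> k")
    case True
    then have "\<not> k \<le> n - 1" using n_ge_3 by arith
    then show ?thesis using True isomorphic_obj_refl[OF zero_obj_ob] by (simp add: alt_dsum_beyond)
  next
    case False
    then have b: "biprod C (alt_dsum ?W k) (?W ! k) (alt_dsum ?W (Suc (Suc k)))"
      using alt_dsum_biprod[OF angle_objects_ob[OF angle_objects_rotated_trivial[OF A]]] by simp
    show ?thesis
    proof (cases "k = n - 1")
      case True
      then have "biprod C (alt_dsum ?W k) (So A) zero_obj"
        using b 1(2) False by (simp add: rotated_trivial_seq_nth alt_dsum_beyond)
      then have "isomorphic_obj C (alt_dsum ?W k) (So A)"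
        using biprod_zero_obj_isomorphic zero_obj by blast
      moreover have "even k" "k \<le> n - 1" using True odd_n n_ge_3 by simp_all
      ultimately show ?thesis by simp
    next
      case False': False
      then have "biprod C (alt_dsum ?W k) zero_obj (alt_dsum ?W (Suc (Suc k)))"
        using b 1(2) False by (simp add: rotated_trivial_seq_nth)
      then have "isomorphic_obj C (alt_dsum ?W k) (alt_dsum ?W (Suc (Suc k)))"
        using biprod_zero_obj_isomorphic[OF biprod_commute zero_obj] by blast
      moreover have "isomorphic_obj C (alt_dsum ?W (Suc (Suc k)))
          (if even (Suc (Suc k)) \<and> Suc (Suc k) \<le> n - 1 then So A else zero_obj)"
        using 1(1)[OF False] by simp
      ultimately have iso: "isomorphic_obj C (alt_dsum ?W k)
          (if even (Suc (Suc k)) \<and> Suc (Suc k) \<le> n - 1 then So A else zero_obj)"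
        by (rule isomorphic_obj_trans)
      have "Suc (Suc k) \<le> n - 1" if ek: "even k"
      proof -
        obtain j where "k = 2 * j" using ek by blast
        moreover obtain m where "n = 2 * m + 1" using odd_n by (blast elim: oddE)
        ultimately show ?thesis using False False' by arith
      qed
      then have "even (Suc (Suc k)) \<and> Suc (Suc k) \<le> n - 1 \<longleftrightarrow> even k \<and> k \<le> n - 1"
        by (cases "even k") simp_all
      then show ?thesis using iso by simp
    qed
  qed
qed

lemma sim_dsum_shift_zero:
  assumes A: "A \<in> ob C"
  shows "sim (dsum A (So A)) zero_obj"
proof -
  let ?W = "rotated_trivial_seq A"
  have W: "angle_objects ?W" using angle_objects_rotated_trivial[OF A] .
  have "Suc (Suc 0) \<le> n - 1" using n_ge_3 by arith
  then have "isomorphic_obj C (alt_dsum ?W 2) (So A)"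
    using alt_dsum_rotated_trivial[OF A, of 2] by (simp add: numeral_2_eq_2)
  moreover have "biprod C (alt_dsum ?W 0) A (alt_dsum ?W 2)"
    using alt_dsum_biprod[OF angle_objects_ob[OF W], of 0] n_ge_3
    by (simp add: numeral_2_eq_2 rotated_trivial_seq_def)
  ultimately have "isomorphic_obj C (alt_dsum ?W 0) (dsum A (So A))"
    using biprod_cong[OF _ dsum_biprod[OF A So_ob[OF A]] isomorphic_obj_refl[OF A]] by blast
  then have "sim (alt_dsum ?W 1) (dsum A (So A))"
    using sim_sym[OF sim_iso_left[OF sim_alt_dsum_even_odd[OF W]]] by blast
  moreover have "isomorphic_obj C (alt_dsum ?W 1) zero_obj"
    using alt_dsum_rotated_trivial[OF A, of 1] by simp
  ultimately show ?thesis using sim_sym sim_iso_left by blast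
qed

subsection \<open>The group $\pi$\<close>

abbreviation cls where
  "cls \<equiv> sim_class n C N"

abbreviation pi_grp where
  "pi_grp \<equiv> pi_group n C N"

lemma equiv_sim: "equiv (ob C) {(A, B). sim A B}"
  unfolding equiv_def refl_on_def sym_def trans_def
  using sim_ob sim_refl sim_sym sim_trans by blast

lemma cls_eq: "sim A B \<Longrightarrow> cls A = cls B"
  unfolding sim_class_def using sim_sym sim_trans by blast

lemma sim_some_class_member:
  assumes "A \<in> ob C"
  shows "sim A (SOME A'. A' \<in> cls A)"
proof -
  have "A \<in> cls A" using sim_refl[OF assms] unfolding sim_class_def by simp
  then have "(SOME A'. A' \<in> cls A) \<in> cls A" by (rule someI)
  then show ?thesis unfolding sim_class_def by simp
qed

lemma pi_carrier: "carrier pi_grp = cls ` ob C"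
  by (simp add: pi_group_def)

lemma pi_one: "one pi_grp = cls zero_obj"
  by (simp add: pi_group_def zero_obj_def)

text \<open>The product is computed on arbitrary representatives and an arbitrary biproduct; it is
  well defined because $\sim$ is compatible with biproducts.\<close>

lemma pi_mult_biprod:
  assumes A: "A \<in> ob C" and B: "B \<in> ob C" and X: "biprod C X A B"
  shows "mult pi_grp (cls A) (cls B) = cls X"
proof -
  let ?A = "SOME A'. A' \<in> cls A" and ?B = "SOME B'. B' \<in> cls B"
  have sA: "sim A ?A" and sB: "sim B ?B" using sim_some_class_member A B by blast+
  then have ob: "?A \<in> ob C" "?B \<in> ob C" using sim_ob by blast+
  let ?X = "SOME X. X \<in> ob C \<and> biprod C X ?A ?B"
  have "\<exists>X. X \<in> ob C \<and> biprod C X ?A ?B" using dsum_biprod[OF ob] dsum_ob[OF ob] by blast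
  then have "biprod C ?X ?A ?B" by (rule someI2_ex) blast
  then have "cls X = cls ?X" using cls_eq[OF sim_biprod[OF sA sB X]] by blast
  then show ?thesis by (simp add: pi_group_def)
qed

lemma pi_mult_dsum: "A \<in> ob C \<Longrightarrow> B \<in> ob C \<Longrightarrow> mult pi_grp (cls A) (cls B) = cls (dsum A B)"
  using pi_mult_biprod dsum_biprod by blast

lemma cls_isomorphic: "isomorphic_obj C A B \<Longrightarrow> cls A = cls B"
  using cls_eq sim_if_isomorphic by blast

lemma dsum_commute_isomorphic: "A \<in> ob C \<Longrightarrow> B \<in> ob C \<Longrightarrow> isomorphic_obj C (dsum A B) (dsum B A)"
  using biprod_unique[OF dsum_biprod biprod_commute[OF dsum_biprod]] by blast

lemma pi_mult_shift_inverse: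
  assumes "A \<in> ob C"
  shows "mult pi_grp (cls (So A)) (cls A) = one pi_grp"
proof -
  have "sim (dsum (So A) A) zero_obj"
    using sim_iso_left[OF sim_dsum_shift_zero dsum_commute_isomorphic] assms by simp
  then have "cls (dsum (So A) A) = cls zero_obj" by (rule cls_eq)
  then show ?thesis using assms by (simp add: pi_mult_dsum pi_one)
qed

lemma pi_comm_group: "comm_group pi_grp"
proof (rule comm_groupI)
  fix x y assume "x \<in> carrier pi_grp" "y \<in> carrier pi_grp"
  then obtain A B where AB: "A \<in> ob C" "B \<in> ob C" "x = cls A" "y = cls B"
    unfolding pi_carrier by blast
  show "mult pi_grp x y \<in> carrier pi_grp" using AB by (simp add: pi_mult_dsum pi_carrier)
  have "cls (dsum A B) = cls (dsum B A)"
    using cls_isomorphic[OF dsum_commute_isomorphic[OF AB(1,2)]] .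
  then show "mult pi_grp x y = mult pi_grp y x" using AB by (simp add: pi_mult_dsum)
next
  show "one pi_grp \<in> carrier pi_grp" unfolding pi_one pi_carrier by simp
next
  fix x y z assume "x \<in> carrier pi_grp" "y \<in> carrier pi_grp" "z \<in> carrier pi_grp"
  then obtain A B D where AB: "A \<in> ob C" "B \<in> ob C" "D \<in> ob C"
    "x = cls A" "y = cls B" "z = cls D"
    unfolding pi_carrier by blast
  have "isomorphic_obj C (dsum (dsum A B) D) (dsum A (dsum B D))"
    using biprod_assoc_isomorphic[OF dsum_biprod dsum_biprod dsum_biprod dsum_biprod] AB by simp
  then have "cls (dsum (dsum A B) D) = cls (dsum A (dsum B D))" by (rule cls_isomorphic)
  then show "mult pi_grp (mult pi_grp x y) z = mult pi_grp x (mult pi_grp y z)"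
    using AB by (simp add: pi_mult_dsum)
next
  fix x assume "x \<in> carrier pi_grp"
  then obtain A where A: "A \<in> ob C" "x = cls A" unfolding pi_carrier by blast
  have "isomorphic_obj C (dsum zero_obj A) A"
    using biprod_zero_obj_isomorphic[OF biprod_commute[OF dsum_biprod] zero_obj] A by simp
  then have "cls (dsum zero_obj A) = cls A" by (rule cls_isomorphic)
  then show "mult pi_grp (one pi_grp) x = x" using A by (simp add: pi_one pi_mult_dsum)
next
  fix x assume "x \<in> carrier pi_grp"
  then obtain A where A: "A \<in> ob C" "x = cls A" unfolding pi_carrier by blast
  then have "cls (So A) \<in> carrier pi_grp" by (simp add: pi_carrier)
  then show "\<exists>y\<in>carrier pi_grp. mult pi_grp y x = one pi_grp"
    using pi_mult_shift_inverse[OF A(1)] A(2) by blast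
qed

lemma pi_inv: "A \<in> ob C \<Longrightarrow> inv\<^bsub>pi_grp\<^esub> (cls A) = cls (So A)"
  using group.inv_equality[OF comm_group.axioms(2)[OF pi_comm_group] pi_mult_shift_inverse]
  by (simp add: pi_carrier)

subsection \<open>The Grothendieck group\<close>

abbreviation gen where
  "gen A \<equiv> frag_of (iso_class C A)"

abbreviation F_grp where
  "F_grp \<equiv> FC C"

abbreviation R_sub where
  "R_sub \<equiv> RC n C N"

lemma F_comm_group: "comm_group F_grp"
  unfolding FC_def by (rule abelian_free_Abelian_group)

lemma F_group: "group F_grp"
  using F_comm_group comm_group.axioms(2) by blast

lemma F_carrier_iff: "x \<in> carrier F_grp \<longleftrightarrow> Poly_Mapping.keys x \<subseteq> iso_class C ` ob C"
  unfolding FC_def by simp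

lemma F_mult[simp]: "mult F_grp x y = x + y"
  and F_one[simp]: "one F_grp = 0"
  unfolding FC_def by simp_all

lemma F_inv: "x \<in> carrier F_grp \<Longrightarrow> inv\<^bsub>F_grp\<^esub> x = - x"
  unfolding FC_def by simp

lemma gen_carrier: "A \<in> ob C \<Longrightarrow> gen A \<in> carrier F_grp"
  unfolding F_carrier_iff by simp

lemma F_add_closed: "x \<in> carrier F_grp \<Longrightarrow> y \<in> carrier F_grp \<Longrightarrow> x + y \<in> carrier F_grp"
  using group.subgroup_self[OF F_group] subgroup.m_closed by fastforce

lemma F_sum_closed: "(\<And>i. i \<in> I \<Longrightarrow> x i \<in> carrier F_grp) \<Longrightarrow> sum x I \<in> carrier F_grp"
  unfolding FC_def by (rule sum_closed_free_Abelian_group) (simp add: FC_def)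

lemma F_cmul_closed: "x \<in> carrier F_grp \<Longrightarrow> frag_cmul k x \<in> carrier F_grp"
  unfolding F_carrier_iff using keys_cmul by blast

definition euler_char :: "'o list \<Rightarrow> 'o set \<Rightarrow>\<^sub>0 int" where
  "euler_char L = (\<Sum>i<n. frag_cmul ((-1) ^ i) (gen (L ! i)))"

lemma chi_eq_euler_char: "chi n C S = euler_char (fst S)"
  unfolding chi_def euler_char_def by simp

lemma euler_char_carrier: "(\<And>i. i < n \<Longrightarrow> L ! i \<in> ob C) \<Longrightarrow> euler_char L \<in> carrier F_grp"
  unfolding euler_char_def by (rule F_sum_closed) (simp add: F_cmul_closed gen_carrier)

lemma chi_image_carrier: "chi n C ` N \<subseteq> carrier F_grp"
proof
  fix x assume "x \<in> chi n C ` N"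
  then obtain L a where La: "(L, a) \<in> N" "x = chi n C (L, a)" by auto
  then have "angle_objects L" unfolding angle_objects_def by blast
  then show "x \<in> carrier F_grp"
    using La(2) chi_eq_euler_char euler_char_carrier[OF angle_objects_ob] by simp
qed

lemma R_eq_generate: "R_sub = generate F_grp (chi n C ` N)"
  using odd_n unfolding RC_def by simp

lemma R_subgroup: "subgroup R_sub F_grp"
  unfolding R_eq_generate using group.generate_is_subgroup[OF F_group chi_image_carrier] .

lemma R_normal: "R_sub \<lhd> F_grp"
  using comm_group.subgroup_imp_normal[OF F_comm_group R_subgroup] .

lemma R_carrier: "x \<in> R_sub \<Longrightarrow> x \<in> carrier F_grp"
  by (rule subgroup.mem_carrier[OF R_subgroup])

lemma R_zero: "0 \<in> R_sub"
  using subgroup.one_closed[OF R_subgroup] by simp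

lemma R_add: "x \<in> R_sub \<Longrightarrow> y \<in> R_sub \<Longrightarrow> x + y \<in> R_sub"
  using subgroup.m_closed[OF R_subgroup] by fastforce

lemma R_neg: "x \<in> R_sub \<Longrightarrow> - x \<in> R_sub"
  using subgroup.m_inv_closed[OF R_subgroup] F_inv R_carrier by fastforce

lemma R_diff: "x \<in> R_sub \<Longrightarrow> y \<in> R_sub \<Longrightarrow> x - y \<in> R_sub"
  using R_add[OF _ R_neg] by (metis diff_conv_add_uminus)

lemma R_cmul:
  assumes "x \<in> R_sub"
  shows "frag_cmul k x \<in> R_sub"
proof -
  have "x [^]\<^bsub>F_grp\<^esub> k \<in> R_sub" using group.subgroup_int_pow_closed[OF F_group R_subgroup assms] .
  moreover have "x [^]\<^bsub>F_grp\<^esub> k = frag_cmul k x"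
    using R_carrier[OF assms] unfolding FC_def by (simp add: F_carrier_iff)
  ultimately show ?thesis by simp
qed

lemma euler_char_in_R:
  assumes "angle_objects L"
  shows "euler_char L \<in> R_sub"
proof -
  obtain a where "(L, a) \<in> N" using assms unfolding angle_objects_def by blast
  then have "chi n C (L, a) \<in> R_sub" unfolding R_eq_generate by (intro generate.incl) blast
  then show ?thesis using chi_eq_euler_char by simp
qed

lemma gen_eq_if_isomorphic: "isomorphic_obj C A B \<Longrightarrow> gen A = gen B"
  using iso_class_eq_if_isomorphic by simp

lemma gen_zero_in_R: "gen zero_obj \<in> R_sub"
proof -
  let ?Z = "zero_obj # zero_obj # replicate (n - 2) zero_obj"
  have "euler_char ?Z = (\<Sum>i<n. frag_cmul ((-1) ^ i) (gen zero_obj))"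
    unfolding euler_char_def by (rule sum.cong) (auto simp: nth_Cons')
  also have "\<dots> = frag_cmul (\<Sum>i<n. (-1) ^ i) (gen zero_obj)" by (simp add: frag_cmul_sum_left)
  also have "\<dots> = gen zero_obj" using sum_neg_one_power_odd[OF odd_n] by simp
  finally show ?thesis
    using euler_char_in_R[OF angle_objects_trivial[OF zero_obj_ob zero_obj]] by simp
qed

lemma euler_char_prefix_in_R:
  assumes L: "angle_objects L" and k: "k \<le> n"
    and zero: "\<And>i. k \<le> i \<Longrightarrow> i < n \<Longrightarrow> isomorphic_obj C (L ! i) zero_obj"
  shows "(\<Sum>i<k. frag_cmul ((-1) ^ i) (gen (L ! i))) \<in> R_sub"
proof -
  let ?tail = "\<Sum>i\<in>{k..<n}. frag_cmul ((-1) ^ i) (gen (L ! i))"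
  have "?tail = (\<Sum>i\<in>{k..<n}. frag_cmul ((-1) ^ i) (gen zero_obj))"
    by (rule sum.cong) (simp_all add: gen_eq_if_isomorphic[OF zero])
  also have "\<dots> = frag_cmul (\<Sum>i\<in>{k..<n}. (-1) ^ i) (gen zero_obj)"
    by (simp add: frag_cmul_sum_left)
  finally have "?tail \<in> R_sub" using R_cmul[OF gen_zero_in_R] by simp
  moreover have "euler_char L = (\<Sum>i<k. frag_cmul ((-1) ^ i) (gen (L ! i))) + ?tail"
    unfolding euler_char_def lessThan_atLeast0 using k by (simp add: sum.atLeastLessThan_concat)
  then have "(\<Sum>i<k. frag_cmul ((-1) ^ i) (gen (L ! i))) = euler_char L - ?tail" by simp
  ultimately show ?thesis using R_diff[OF euler_char_in_R[OF L]] by simp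
qed

text \<open>The $n$-angle $A \to X \to B \to 0 \to \cdots \to 0$ (a direct sum of two rotated
  trivial ones) gives the relation $[X] = [A] + [B]$.\<close>

lemma gen_biprod_in_R:
  assumes A: "A \<in> ob C" and B: "B \<in> ob C" and X: "biprod C X A B"
  shows "gen X - gen A - gen B \<in> R_sub"
proof -
  let ?T = "A # A # replicate (n - 2) zero_obj"
  let ?L = "map (\<lambda>i. if i = 0 then A else if i = 1 then X else if i = 2 then B else zero_obj) [0..<n]"
  have components: "biprod C (?L ! i) (?T ! i) (adjacent_seq 1 B ! i)" if i: "i < n" for i
  proof -
    consider "i = 0" | "i = 1" | "i = 2" | "i \<ge> 3" by linarith
    then show ?thesis
    proof cases
      case 1 then show ?thesis using i biprod_zero_obj[OF A zero_obj] by (simp add: adjacent_seq_def)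
    next
      case 2 then show ?thesis using i X by (simp add: adjacent_seq_def)
    next
      case 3 then show ?thesis using i biprod_commute[OF biprod_zero_obj[OF B zero_obj]]
        by (simp add: adjacent_seq_def)
    next
      case 4 then show ?thesis using i biprod_zero_obj[OF zero_obj_ob zero_obj]
        by (simp add: adjacent_seq_def nth_Cons')
    qed
  qed
  have "angle_objects (adjacent_seq 1 B)" using angle_objects_adjacent[OF _ B] n_ge_3 by simp
  then have L: "angle_objects ?L"
    using angle_objects_biprod[OF angle_objects_trivial[OF A zero_obj]] components by simp
  have "(\<Sum>i<3. frag_cmul ((-1) ^ i) (gen (?L ! i))) \<in> R_sub"
    by (rule euler_char_prefix_in_R[OF L]) (use n_ge_3 isomorphic_obj_refl[OF zero_obj_ob] in auto)
  moreover have "(\<Sum>i<3. frag_cmul ((-1) ^ i) (gen (?L ! i))) = gen A - gen X + gen B"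
    using n_ge_3 by (simp add: numeral_3_eq_3)
  ultimately have "gen A - gen X + gen B \<in> R_sub" by simp
  then have "- (gen A - gen X + gen B) \<in> R_sub" by (rule R_neg)
  then show ?thesis by (simp add: algebra_simps)
qed

lemma gen_head_diff_in_R:
  assumes P: "angle_objects P" and Q: "angle_objects Q" and tl: "tl P = tl Q"
  shows "gen (P ! 0) - gen (Q ! 0) \<in> R_sub"
proof -
  obtain m where m: "n = Suc m" using n_ge_3 by (cases n) auto
  have "length P = n" "length Q = n" using angle_objects_length P Q by auto
  then have eq: "\<And>i. i < m \<Longrightarrow> Q ! Suc i = P ! Suc i" using nth_eq_if_tl_eq[OF _ tl] m by simp
  have shift: "euler_char L = (\<Sum>i<Suc m. frag_cmul ((-1) ^ i) (gen (L ! i)))" for L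
    unfolding euler_char_def using m by simp
  have "euler_char P = gen (P ! 0) + (\<Sum>i<m. frag_cmul ((-1) ^ Suc i) (gen (P ! Suc i)))"
    unfolding shift sum.lessThan_Suc_shift by simp
  moreover have "euler_char Q = gen (Q ! 0) + (\<Sum>i<m. frag_cmul ((-1) ^ Suc i) (gen (P ! Suc i)))"
    unfolding shift sum.lessThan_Suc_shift using eq by simp
  ultimately have "euler_char P - euler_char Q = gen (P ! 0) - gen (Q ! 0)" by simp
  then show ?thesis using R_diff[OF euler_char_in_R[OF P] euler_char_in_R[OF Q]] by simp
qed

lemma gen_diff_in_R_if_sim:
  assumes "sim A B"
  shows "gen A - gen B \<in> R_sub"
proof -
  obtain K P Q where h: "angle_objects P" "angle_objects Q" "biprod C (P ! 0) A K"
    "biprod C (Q ! 0) B K" "tl P = tl Q"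
    using simE[OF assms] by blast
  have ob: "A \<in> ob C" "B \<in> ob C" "K \<in> ob C" using h biprod_ob by blast+
  have "(gen (P ! 0) - gen (Q ! 0)) - (gen (P ! 0) - gen A - gen K) + (gen (Q ! 0) - gen B - gen K)
      \<in> R_sub"
    using R_add[OF R_diff[OF gen_head_diff_in_R[OF h(1,2,5)] gen_biprod_in_R[OF ob(1,3) h(3)]]
        gen_biprod_in_R[OF ob(2,3) h(4)]] .
  then show ?thesis by (simp add: algebra_simps)
qed

lemma gen_shift_in_R:
  assumes A: "A \<in> ob C"
  shows "gen A + gen (So A) \<in> R_sub"
proof -
  have SA: "So A \<in> ob C" using A by simp
  have "(gen (dsum A (So A)) - gen zero_obj) + gen zero_obj - (gen (dsum A (So A)) - gen A - gen (So A))
      \<in> R_sub"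
    using R_diff[OF R_add[OF gen_diff_in_R_if_sim[OF sim_dsum_shift_zero[OF A]] gen_zero_in_R]
        gen_biprod_in_R[OF A SA dsum_biprod[OF A SA]]] .
  then show ?thesis by (simp add: algebra_simps)
qed

text \<open>Every element of $K_0$ is the class of a single object: $[A] - [B] = [A \oplus \Sigma B]$.\<close>

lemma exists_gen_representative:
  assumes "x \<in> carrier F_grp"
  shows "\<exists>A\<in>ob C. x - gen A \<in> R_sub"
proof (rule free_Abelian_group_induct[where P = "\<lambda>x. \<exists>A\<in>ob C. x - gen A \<in> R_sub"])
  show "Poly_Mapping.keys x \<subseteq> iso_class C ` ob C" using assms F_carrier_iff by blast
  show "\<exists>A\<in>ob C. 0 - gen A \<in> R_sub" using R_neg[OF gen_zero_in_R] zero_obj_ob by force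
next
  fix x y assume "\<exists>A\<in>ob C. x - gen A \<in> R_sub" "\<exists>A\<in>ob C. y - gen A \<in> R_sub"
  then obtain A B where AB: "A \<in> ob C" "B \<in> ob C" "x - gen A \<in> R_sub" "y - gen B \<in> R_sub" by blast
  have SB: "So B \<in> ob C" using AB by simp
  let ?D = "dsum A (So B)"
  have "(x - gen A) - (y - gen B) - (gen ?D - gen A - gen (So B)) - (gen B + gen (So B)) \<in> R_sub"
    using R_diff[OF R_diff[OF R_diff[OF AB(3,4)] gen_biprod_in_R[OF AB(1) SB dsum_biprod[OF AB(1) SB]]]
        gen_shift_in_R[OF AB(2)]] .
  then have "x - y - gen ?D \<in> R_sub" by (simp add: algebra_simps)
  then show "\<exists>A\<in>ob C. x - y - gen A \<in> R_sub" using AB SB dsum_ob by blast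
next
  fix a assume "a \<in> iso_class C ` ob C"
  then obtain A where "A \<in> ob C" "a = iso_class C A" by blast
  then show "\<exists>A\<in>ob C. frag_of a - gen A \<in> R_sub" using R_zero by (intro bexI[of _ A]) simp_all
qed

lemma exists_hom_to_pi: "\<exists>g. g \<in> hom F_grp pi_grp \<and> (\<forall>A\<in>ob C. g (gen A) = cls A)"
proof -
  let ?f = "\<lambda>s. cls (SOME A. A \<in> s)"
  have some: "(SOME A'. A' \<in> iso_class C A) \<in> iso_class C A" if A: "A \<in> ob C" for A
    by (rule someI[of _ A]) (use A in \<open>simp add: iso_class_def isomorphic_obj_refl\<close>)
  then have "?f ` (iso_class C ` ob C) \<subseteq> carrier pi_grp"
    by (auto simp: iso_class_def pi_carrier)
  then obtain g where g: "g \<in> hom (free_Abelian_group (iso_class C ` ob C)) pi_grp"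
    "\<And>x. x \<in> iso_class C ` ob C \<Longrightarrow> g (frag_of x) = ?f x"
    using comm_group.free_Abelian_group_universal[OF pi_comm_group] by metis
  have "g (gen A) = cls A" if A: "A \<in> ob C" for A
  proof -
    have "isomorphic_obj C A (SOME A'. A' \<in> iso_class C A)"
      using some[OF A] by (simp add: iso_class_def)
    then show ?thesis using g(2) A cls_isomorphic by simp
  qed
  then show ?thesis using g(1) unfolding FC_def by blast
qed

function alt_gen_sum :: "'o list \<Rightarrow> nat \<Rightarrow> 'o set \<Rightarrow>\<^sub>0 int" where
  "alt_gen_sum L k = (if n \<le> k then 0 else gen (L ! k) + alt_gen_sum L (Suc (Suc k)))"
  by auto
termination by (relation "measure (\<lambda>(L, k). n - k)") auto

declare alt_gen_sum.simps[simp del]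

lemma euler_char_tail:
  "k \<le> n \<Longrightarrow> (\<Sum>i\<in>{k..<n}. frag_cmul ((-1) ^ i) (gen (L ! i))) =
    (if even k then alt_gen_sum L k - alt_gen_sum L (Suc k) else alt_gen_sum L (Suc k) - alt_gen_sum L k)"
proof (induction k rule: inc_induct)
  case base
  then show ?case by (simp add: alt_gen_sum.simps)
next
  case (step k)
  have "alt_gen_sum L k = gen (L ! k) + alt_gen_sum L (Suc (Suc k))"
    using step(2) by (subst alt_gen_sum.simps) simp
  moreover have "(\<Sum>i\<in>{k..<n}. frag_cmul ((-1) ^ i) (gen (L ! i))) =
      frag_cmul ((-1) ^ k) (gen (L ! k)) + (\<Sum>i\<in>{Suc k..<n}. frag_cmul ((-1) ^ i) (gen (L ! i)))"
    by (rule sum.atLeast_Suc_lessThan[OF step(2)])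
  ultimately show ?case using step.IH by (cases "even k") (simp_all add: algebra_simps)
qed

lemma euler_char_eq_alt_gen_sum: "euler_char L = alt_gen_sum L 0 - alt_gen_sum L 1"
  using euler_char_tail[of 0 L] by (simp add: euler_char_def lessThan_atLeast0)

lemma alt_gen_sum_carrier: "(\<And>i. i < n \<Longrightarrow> L ! i \<in> ob C) \<Longrightarrow> alt_gen_sum L k \<in> carrier F_grp"
proof (induction L k rule: alt_gen_sum.induct)
  case (1 L k)
  then show ?case using F_add_closed gen_carrier
    by (subst alt_gen_sum.simps) (simp add: FC_def)
qed

lemma pi_hom_group_hom: "g \<in> hom F_grp pi_grp \<Longrightarrow> group_hom F_grp pi_grp g"
  unfolding group_hom_def group_hom_axioms_def
  using F_group comm_group.axioms(2)[OF pi_comm_group] by blast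

lemma hom_alt_gen_sum:
  assumes g: "g \<in> hom F_grp pi_grp" and gen: "\<And>A. A \<in> ob C \<Longrightarrow> g (gen A) = cls A"
    and L: "\<And>i. i < n \<Longrightarrow> L ! i \<in> ob C"
  shows "g (alt_gen_sum L k) = cls (alt_dsum L k)"
proof -
  interpret gh: group_hom F_grp pi_grp g using pi_hom_group_hom[OF g] .
  show ?thesis using L
  proof (induction L k rule: alt_gen_sum.induct)
    case (1 L k)
    show ?case
    proof (cases "n \<le> k")
      case True
      then show ?thesis using gh.hom_one by (simp add: alt_gen_sum.simps alt_dsum_beyond pi_one)
    next
      case False
      then have "alt_gen_sum L k = gen (L ! k) + alt_gen_sum L (Suc (Suc k))"
        by (subst alt_gen_sum.simps) simp
      then have "g (alt_gen_sum L k) = mult pi_grp (g (gen (L ! k))) (g (alt_gen_sum L (Suc (Suc k))))"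
        using gh.hom_mult[OF gen_carrier alt_gen_sum_carrier] 1(2) False by simp
      also have "\<dots> = mult pi_grp (cls (L ! k)) (cls (alt_dsum L (Suc (Suc k))))"
        using 1 False gen by simp
      also have "\<dots> = cls (alt_dsum L k)"
        using pi_mult_biprod[OF _ alt_dsum_ob alt_dsum_biprod] 1(2) False by simp
      finally show ?thesis .
    qed
  qed
qed

lemma hom_euler_char:
  assumes g: "g \<in> hom F_grp pi_grp" and gen: "\<And>A. A \<in> ob C \<Longrightarrow> g (gen A) = cls A"
    and L: "angle_objects L"
  shows "g (euler_char L) = one pi_grp"
proof -
  interpret gh: group_hom F_grp pi_grp g using pi_hom_group_hom[OF g] .
  note Lob = angle_objects_ob[OF L]
  note carrier = alt_gen_sum_carrier[OF Lob]
  have "euler_char L = mult F_grp (alt_gen_sum L 0) (inv\<^bsub>F_grp\<^esub> (alt_gen_sum L 1))"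
    using F_inv[OF carrier] by (simp add: euler_char_eq_alt_gen_sum)
  then have "g (euler_char L) = mult pi_grp (g (alt_gen_sum L 0)) (inv\<^bsub>pi_grp\<^esub> (g (alt_gen_sum L 1)))"
    using gh.hom_mult[OF carrier group.inv_closed[OF F_group carrier]] gh.hom_inv[OF carrier] by simp
  also have "\<dots> = mult pi_grp (cls (alt_dsum L 1)) (inv\<^bsub>pi_grp\<^esub> (cls (alt_dsum L 1)))"
    using hom_alt_gen_sum[OF g gen Lob] cls_eq[OF sim_alt_dsum_even_odd[OF L]] by simp
  also have "\<dots> = one pi_grp"
    using group.r_inv[OF comm_group.axioms(2)[OF pi_comm_group]] alt_dsum_ob[OF Lob]
    by (simp add: pi_carrier)
  finally show ?thesis .
qed

lemma cls_eq_if_gen_diff_in_R: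
  assumes A: "A \<in> ob C" and B: "B \<in> ob C" and d: "gen A - gen B \<in> R_sub"
  shows "cls A = cls B"
proof -
  obtain g where g: "g \<in> hom F_grp pi_grp" and gen: "\<forall>A\<in>ob C. g (gen A) = cls A"
    using exists_hom_to_pi by blast
  interpret gh: group_hom F_grp pi_grp g using pi_hom_group_hom[OF g] .
  have "chi n C ` N \<subseteq> kernel F_grp pi_grp g"
  proof
    fix x assume "x \<in> chi n C ` N"
    then obtain L a where La: "(L, a) \<in> N" "x = chi n C (L, a)" by auto
    then have "angle_objects L" unfolding angle_objects_def by blast
    then have "g x = one pi_grp" using La(2) chi_eq_euler_char hom_euler_char[OF g] gen by simp
    moreover have "x \<in> carrier F_grp" using chi_image_carrier La by blast
    ultimately show "x \<in> kernel F_grp pi_grp g" unfolding kernel_def by simp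
  qed
  then have "R_sub \<subseteq> kernel F_grp pi_grp g"
    unfolding R_eq_generate using group.generate_subgroup_incl[OF F_group _ gh.subgroup_kernel] by blast
  then have "g (gen A - gen B) = one pi_grp" using d unfolding kernel_def by blast
  moreover have "gen A - gen B = mult F_grp (gen A) (inv\<^bsub>F_grp\<^esub> (gen B))"
    using F_inv gen_carrier B by simp
  ultimately have e: "mult pi_grp (cls A) (inv\<^bsub>pi_grp\<^esub> (cls B)) = one pi_grp"
    using gh.hom_mult gh.hom_inv gen_carrier A B gen by (simp del: F_mult)
  have cA: "cls A \<in> carrier pi_grp" and cB: "cls B \<in> carrier pi_grp" using A B pi_carrier by blast+
  then have "cls A = mult pi_grp (mult pi_grp (cls A) (inv\<^bsub>pi_grp\<^esub> (cls B))) (cls B)"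
    by (simp add: gh.H.m_assoc)
  then show ?thesis using e cB by simp
qed

lemma R_coset_eq:
  assumes x: "x \<in> carrier F_grp" and y: "y \<in> carrier F_grp" and d: "x - y \<in> R_sub"
  shows "r_coset F_grp R_sub x = r_coset F_grp R_sub y"
proof -
  have "mult F_grp (x - y) y \<in> r_coset F_grp R_sub y"
    using group.rcosI[OF F_group d subgroup.subset[OF R_subgroup] y] .
  then have "x \<in> r_coset F_grp R_sub y" by simp
  then show ?thesis using group.repr_independence[OF F_group _ y R_subgroup] by blast
qed

lemma R_coset_eqD:
  assumes x: "x \<in> carrier F_grp" and y: "y \<in> carrier F_grp"
    and e: "r_coset F_grp R_sub x = r_coset F_grp R_sub y"
  shows "x - y \<in> R_sub"
proof -
  have "x \<in> r_coset F_grp R_sub y" using group.rcos_self[OF F_group x R_subgroup] e by simp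
  then obtain h where "h \<in> R_sub" "x = mult F_grp h y" unfolding r_coset_def by blast
  then show ?thesis by simp
qed

definition K0_map :: "'o set \<Rightarrow> ('o set \<Rightarrow>\<^sub>0 int) set" where
  "K0_map x = r_coset F_grp R_sub (gen (SOME A. A \<in> x))"

lemma K0_map_cls:
  assumes A: "A \<in> ob C"
  shows "K0_map (cls A) = K0_class n C N A"
proof -
  let ?A = "SOME A'. A' \<in> cls A"
  have s: "sim ?A A" using sim_sym[OF sim_some_class_member[OF A]] .
  then have "?A \<in> ob C" using sim_ob by blast
  then show ?thesis unfolding K0_map_def K0_class_def
    using R_coset_eq[OF gen_carrier gen_carrier[OF A] gen_diff_in_R_if_sim[OF s]] by simp
qed

lemma K0_carrier: "carrier (K0 n C N) = r_coset F_grp R_sub ` carrier F_grp"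
  unfolding K0_def by (rule carrier_FactGroup)

lemma K0_mult: "mult (K0 n C N) = set_mult F_grp"
  unfolding K0_def by simp

lemma K0_map_hom: "K0_map \<in> hom pi_grp (K0 n C N)"
proof (rule homI)
  fix x assume "x \<in> carrier pi_grp"
  then obtain A where A: "A \<in> ob C" "x = cls A" using pi_carrier by blast
  then have "K0_map x = r_coset F_grp R_sub (gen A)" by (simp add: K0_map_cls K0_class_def)
  then show "K0_map x \<in> carrier (K0 n C N)" unfolding K0_carrier using gen_carrier[OF A(1)] by blast
next
  fix x y assume "x \<in> carrier pi_grp" "y \<in> carrier pi_grp"
  then obtain A B where AB: "A \<in> ob C" "B \<in> ob C" "x = cls A" "y = cls B"
    using pi_carrier by auto
  then have "gen (dsum A B) - (gen A + gen B) \<in> R_sub"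
    using gen_biprod_in_R[OF AB(1,2) dsum_biprod[OF AB(1,2)]] by (simp add: algebra_simps)
  then have "r_coset F_grp R_sub (gen (dsum A B)) = r_coset F_grp R_sub (gen A + gen B)"
    using R_coset_eq[OF gen_carrier F_add_closed[OF gen_carrier gen_carrier]] AB by simp
  also have "\<dots> = set_mult F_grp (r_coset F_grp R_sub (gen A)) (r_coset F_grp R_sub (gen B))"
    using normal.rcos_sum[OF R_normal gen_carrier[OF AB(1)] gen_carrier[OF AB(2)]] by simp
  finally show "K0_map (mult pi_grp x y) = mult (K0 n C N) (K0_map x) (K0_map y)"
    using AB by (simp add: pi_mult_dsum K0_map_cls K0_class_def K0_mult)
qed

lemma K0_map_iso: "K0_map \<in> iso pi_grp (K0 n C N)"
proof -
  have "inj_on K0_map (carrier pi_grp)"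
  proof (rule inj_onI)
    fix x y assume "x \<in> carrier pi_grp" "y \<in> carrier pi_grp" and e: "K0_map x = K0_map y"
    then obtain A B where AB: "A \<in> ob C" "B \<in> ob C" "x = cls A" "y = cls B"
      using pi_carrier by auto
    then have "r_coset F_grp R_sub (gen A) = r_coset F_grp R_sub (gen B)"
      using e by (simp add: K0_map_cls K0_class_def)
    then show "x = y"
      using AB cls_eq_if_gen_diff_in_R R_coset_eqD gen_carrier by blast
  qed
  moreover have "carrier (K0 n C N) \<subseteq> K0_map ` carrier pi_grp"
  proof
    fix c assume "c \<in> carrier (K0 n C N)"
    then obtain x where x: "x \<in> carrier F_grp" "c = r_coset F_grp R_sub x" using K0_carrier by blast
    then obtain A where A: "A \<in> ob C" "x - gen A \<in> R_sub" using exists_gen_representative by blast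
    then have "c = K0_map (cls A)"
      using x R_coset_eq[OF x(1) gen_carrier] by (simp add: K0_map_cls K0_class_def)
    then show "c \<in> K0_map ` carrier pi_grp" using A(1) pi_carrier by simp
  qed
  ultimately show ?thesis
    using K0_map_hom hom_in_carrier[OF K0_map_hom] unfolding iso_def bij_betw_def by blast
qed

end

theorem proposition2p3:
  fixes n :: nat and C :: "('o, 'm) addcat" and So :: "'o \<Rightarrow> 'o" and Sm :: "'m \<Rightarrow> 'm"
    and N :: "('o, 'm) nseq set"
  assumes "odd n" and "3 \<le> n" and "n_angulated n C So Sm N"
  shows "equiv (ob C) {(A, B). sim_rel n C N A B}
    \<and> comm_group (pi_group n C N)
    \<and> (\<forall>A\<in>ob C. \<forall>B\<in>ob C. \<forall>X. biprod C X A B \<longrightarrow>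
         mult (pi_group n C N) (sim_class n C N A) (sim_class n C N B) = sim_class n C N X)
    \<and> (\<forall>A\<in>ob C. inv\<^bsub>pi_group n C N\<^esub> (sim_class n C N A) = sim_class n C N (So A))
    \<and> (\<exists>h. h \<in> iso (pi_group n C N) (K0 n C N) \<and>
           (\<forall>A\<in>ob C. h (sim_class n C N A) = K0_class n C N A))"
proof -
  have "is_additive C" using assms(3) unfolding n_angulated_def by blast
  then interpret additive_cat C by (rule additive_cat.intro)
  interpret odd_n_angulated_cat C n So Sm N by unfold_locales (use assms in blast)+
  show ?thesis
    using equiv_sim pi_comm_group pi_mult_biprod pi_inv K0_map_iso K0_map_cls by blast
qed

end
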